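(* Let $\Omega\subset\mathbb{R}^N$ be a domain, $a\in C(\bar\Omega)\cap L^\infty(\Omega)$, and $K:\Omega\times\Omega\to[0,\infty)$ such that for every $x\in\Omega$ the map $K(x,\cdot)$ is measurable, for almost every $y\in\Omega$ the map $K(\cdot,y)$ is uniformly continuous, and there exist $r_0\ge r_1>0$, $C_0\ge c_0>0$ with $C_0\,\mathbb{1}_{\Omega\cap B_{r_0}(x)}(y)\ge K(x,y)\ge c_0\,\mathbb{1}_{\Omega\cap B_{r_1}(x)}(y)$ for all $x,y\in\Omega$. Let $(\Omega_n)_{n\in\mathbb{N}}$ be subdomains of $\Omega$ with $\Omega_n\subset\Omega_{n+1}$ and $\lim_{n\to\infty}\Omega_n=\Omega$. Then $$\lim_{n\to\infty}\lambda_p(\mathcal{L}_{\Omega_n}+a)=\lambda_p(\mathcal{L}_\Omega+a).$$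
   Context: For a subdomain $D\subset\Omega$, $\mathcal{L}_D[\varphi](x):=\int_D K(x,y)\varphi(y)\,dy$ for $x\in D$, and $\lambda_p(\mathcal{L}_D+a):=\sup\{\lambda\in\mathbb{R}:\exists\varphi\in C(\bar D),\ \varphi>0,\ \mathcal{L}_D[\varphi]+a\varphi+\lambda\varphi\le0\text{ in }D\}$. *)

theory Defs
  imports "HOL-Analysis.Analysis"
begin

definition nonlocal_op ::
  "('a::euclidean_space) set \<Rightarrow> ('a \<Rightarrow> 'a \<Rightarrow> real) \<Rightarrow> ('a \<Rightarrow> real) \<Rightarrow> 'a \<Rightarrow> real" where
  "nonlocal_op D K \<phi> x = (LINT y:D|lebesgue. K x y * \<phi> y)"

definition lambda_p ::
  "('a::euclidean_space) set \<Rightarrow> ('a \<Rightarrow> 'a \<Rightarrow> real) \<Rightarrow> ('a \<Rightarrow> real) \<Rightarrow> real" where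
  "lambda_p D K a = Sup {l. \<exists>\<phi>. continuous_on (closure D) \<phi> \<and> (\<forall>x\<in>closure D. \<phi> x > 0) \<and>
      (\<forall>x\<in>D. nonlocal_op D K \<phi> x + a x * \<phi> x + l * \<phi> x \<le> 0)}"

definition is_domain :: "('a::topological_space) set \<Rightarrow> bool" where
  "is_domain D \<longleftrightarrow> open D \<and> connected D \<and> D \<noteq> {}"

end

theory Submission
  imports Defs
begin

text \<open>Enlarging the domain shrinks the set of admissible \<open>\<lambda>\<close> (restrict the test function and use
  \<open>K \<ge> 0\<close>), so \<open>\<lambda>\<^sub>p(\<Omega>\<^sub>n)\<close> decreases to some \<open>L \<ge> \<lambda>\<^sub>p(\<Omega>)\<close>, and it suffices to show that every
  \<open>\<mu> < L\<close> is admissible on \<open>\<Omega>\<close>. Take positive supersolutions \<open>\<phi>\<^sub>n\<close> of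
  \<open>\<L>\<^sub>\<Omega>\<^sub>n + a + \<mu>\<close> normalised to unit mass on a fixed ball. With \<open>b = -a - \<mu> \<ge> L - \<mu> > 0\<close> and
  \<open>K \<ge> c\<^sub>0\<close> on balls of radius \<open>r\<^sub>1\<close>, the supersolution inequality gives the Harnack-type bound
  \<open>\<integral>\<^bsub>B(x,r\<^sub>1)\<^esub> \<phi>\<^sub>n \<le> (sup b / c\<^sub>0) \<phi>\<^sub>n(x)\<close>; chaining it along overlapping balls in the connected
  \<open>\<Omega>\<close> gives local mass bounds and positive lower bounds uniform in \<open>n\<close>. By Fatou,
  \<open>\<psi> = liminf \<phi>\<^sub>n\<close> is positive, locally integrable and satisfies \<open>\<L>\<^sub>\<Omega>\<psi> \<le> b \<psi>\<close>. One smoothing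
  step, \<open>\<phi> = (\<integral> K(\<cdot>,y) \<psi>(y) dy) / b\<close>, then extends continuously to \<open>closure \<Omega>\<close> (as
  \<open>K(\<cdot>,y)\<close> is uniformly continuous), is positive, and \<open>\<phi> \<le> \<psi>\<close> gives \<open>\<L>\<^sub>\<Omega>\<phi> + a\<phi> + \<mu>\<phi> \<le> 0\<close>.\<close>

definition positive_supersolution ::
  "('a::euclidean_space) set \<Rightarrow> ('a \<Rightarrow> 'a \<Rightarrow> real) \<Rightarrow> ('a \<Rightarrow> real) \<Rightarrow> real \<Rightarrow> ('a \<Rightarrow> real) \<Rightarrow> bool"
  where "positive_supersolution D K a l \<phi> \<longleftrightarrow>
    continuous_on (closure D) \<phi> \<and> (\<forall>x\<in>closure D. \<phi> x > 0) \<and>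
    (\<forall>x\<in>D. nonlocal_op D K \<phi> x + a x * \<phi> x + l * \<phi> x \<le> 0)"

definition supersolution_levels ::
  "('a::euclidean_space) set \<Rightarrow> ('a \<Rightarrow> 'a \<Rightarrow> real) \<Rightarrow> ('a \<Rightarrow> real) \<Rightarrow> real set"
  where "supersolution_levels D K a = {l. \<exists>\<phi>. positive_supersolution D K a l \<phi>}"

lemma positive_supersolutionD:
  assumes "positive_supersolution D K a l \<phi>"
  shows "continuous_on (closure D) \<phi>" "\<And>x. x \<in> closure D \<Longrightarrow> \<phi> x > 0"
    "\<And>x. x \<in> D \<Longrightarrow> \<phi> x > 0"
    "\<And>x. x \<in> D \<Longrightarrow> nonlocal_op D K \<phi> x + a x * \<phi> x + l * \<phi> x \<le> 0"
  using assms closure_subset unfolding positive_supersolution_def by auto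

lemma lambda_p_eq_Sup_levels: "lambda_p D K a = Sup (supersolution_levels D K a)"
  unfolding lambda_p_def supersolution_levels_def positive_supersolution_def ..

lemma nonlocal_op_divide: "nonlocal_op D K (\<lambda>y. f y / c) x = nonlocal_op D K f x / c"
proof -
  have "(\<lambda>y. indicator D y *\<^sub>R (K x y * (f y / c))) = (\<lambda>y. indicator D y *\<^sub>R (K x y * f y) / c)"
    by (auto simp: fun_eq_iff)
  then show ?thesis unfolding nonlocal_op_def set_lebesgue_integral_def by simp
qed

lemma positive_supersolution_divide:
  assumes "positive_supersolution D K a l f" "c > 0"
  shows "positive_supersolution D K a l (\<lambda>y. f y / c)"
  unfolding positive_supersolution_def
proof (intro conjI ballI)
  note f = positive_supersolutionD[OF assms(1)]
  show "continuous_on (closure D) (\<lambda>y. f y / c)"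
    using f(1) assms(2) by (intro continuous_intros) auto
  show "f x / c > 0" if "x \<in> closure D" for x
    using f(2)[OF that] assms(2) by simp
  fix x assume "x \<in> D"
  then have "(nonlocal_op D K f x + a x * f x + l * f x) / c \<le> 0"
    using f(4) assms(2) by (simp add: divide_nonpos_pos)
  then show "nonlocal_op D K (\<lambda>y. f y / c) x + a x * (f x / c) + l * (f x / c) \<le> 0"
    by (simp add: nonlocal_op_divide add_divide_distrib)
qed

lemma connected_induction_dist:
  fixes S :: "'a::metric_space set"
  assumes "connected S" "a \<in> S" "b \<in> S" "P a" "r > 0"
    and step: "\<And>x y. x \<in> S \<Longrightarrow> y \<in> S \<Longrightarrow> dist x y < r \<Longrightarrow> P x \<Longrightarrow> P y"
  shows "P b"
proof (rule connected_induction_simple[where P = P, OF assms(1-4)])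
  fix z assume "z \<in> S"
  show "\<exists>T. openin (top_of_set S) T \<and> z \<in> T \<and> (\<forall>x\<in>T. \<forall>y\<in>T. P x \<longrightarrow> P y)"
  proof (intro exI conjI ballI impI)
    show "openin (top_of_set S) (S \<inter> ball z (r/2))" by (simp add: openin_open_Int)
    show "z \<in> S \<inter> ball z (r/2)" using \<open>z \<in> S\<close> \<open>r > 0\<close> by simp
    fix x y assume "x \<in> S \<inter> ball z (r/2)" "y \<in> S \<inter> ball z (r/2)" "P x"
    moreover have "dist x y < r"
      using calculation(1,2) dist_triangle_half_l[of x z r y] by (simp add: dist_commute)
    ultimately show "P y" using step by blast
  qed
qed

lemma borel_measurable_indicator_mult_continuous:
  fixes f :: "'a::euclidean_space \<Rightarrow> real"
  assumes "open D" "continuous_on (closure D) f"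
  shows "(\<lambda>y. indicator D y * f y) \<in> borel_measurable lebesgue"
proof -
  have "continuous_on D f" using assms(2) closure_subset continuous_on_subset by blast
  then have "(\<lambda>y. indicator D y *\<^sub>R f y) \<in> borel_measurable borel"
    using assms(1) by (intro borel_measurable_continuous_on_indicator) auto
  then have "(\<lambda>y. indicator D y *\<^sub>R f y) \<in> borel_measurable lebesgue"
    by (simp add: measurable_completion measurable_lborel1)
  then show ?thesis by simp
qed

lemma measure_ball_pos:
  fixes p :: "'a::euclidean_space"
  assumes "0 < s"
  shows "emeasure lebesgue (ball p s) = ennreal (measure lebesgue (ball p s))"
    and "measure lebesgue (ball p s) > 0"
  using assms by (simp_all add: measure_def emeasure_ball)

lemma nn_integral_mult_indicator_mono:
  fixes f :: "'a \<Rightarrow> ennreal"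
  assumes "A \<subseteq> B"
  shows "(\<integral>\<^sup>+ x. f x * indicator A x \<partial>M) \<le> (\<integral>\<^sup>+ x. f x * indicator B x \<partial>M)"
  by (rule nn_integral_mono) (use assms in \<open>auto simp: indicator_def\<close>)

lemma nn_integral_ball_le_imp_small_value:
  fixes g :: "'a::euclidean_space \<Rightarrow> ennreal"
  assumes s: "0 < s" and M: "(\<integral>\<^sup>+ y. g y * indicator (ball p s) y \<partial>lebesgue) \<le> ennreal M"
  shows "\<exists>q\<in>ball p s. g q \<le> ennreal ((\<bar>M\<bar> + 1) / measure lebesgue (ball p s))"
proof (rule ccontr)
  define V where "V = measure lebesgue (ball p s)"
  define m where "m = (\<bar>M\<bar> + 1) / V"
  have V: "V > 0" "emeasure lebesgue (ball p s) = ennreal V" using measure_ball_pos[OF s] by (auto simp: V_def)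
  assume "\<not> (\<exists>q\<in>ball p s. g q \<le> ennreal ((\<bar>M\<bar> + 1) / measure lebesgue (ball p s)))"
  then have gt: "\<And>q. q \<in> ball p s \<Longrightarrow> ennreal m \<le> g q" by (force simp: m_def V_def)
  have "ennreal (\<bar>M\<bar> + 1) = ennreal m * emeasure lebesgue (ball p s)"
    using V by (simp add: m_def ennreal_mult[symmetric])
  also have "\<dots> = (\<integral>\<^sup>+ y. ennreal m * indicator (ball p s) y \<partial>lebesgue)"
    by (rule nn_integral_cmult_indicator[symmetric]) simp
  also have "\<dots> \<le> (\<integral>\<^sup>+ y. g y * indicator (ball p s) y \<partial>lebesgue)"
    by (rule nn_integral_mono) (auto simp: indicator_def gt)
  also have "\<dots> \<le> ennreal \<bar>M\<bar>" using M by (rule order_trans) simp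
  finally show False by simp
qed

lemma emeasure_open_Int_ball_pos:
  fixes S :: "'a::euclidean_space set"
  assumes S: "open S" and z: "z \<in> closure S" and r: "r > 0"
  shows "emeasure lebesgue (S \<inter> ball z r) > 0"
proof -
  obtain w where w: "w \<in> S" "dist w z < r" using z[unfolded closure_approachable, rule_format, OF r] by blast
  obtain e where e: "e > 0" "ball w e \<subseteq> S" using S w(1) open_contains_ball by blast
  define e' where "e' = min e (r - dist w z)"
  have e': "e' > 0" using e w by (simp add: e'_def)
  have "ball w e' \<subseteq> S \<inter> ball z r"
  proof
    fix t assume "t \<in> ball w e'"
    then have "dist w t < e'" by simp
    then have "t \<in> ball w e" "dist z t < r" using dist_triangle[of z t w] dist_commute[of z w]
      by (auto simp: e'_def)
    then show "t \<in> S \<inter> ball z r" using e by auto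
  qed
  then have "emeasure lebesgue (ball w e') \<le> emeasure lebesgue (S \<inter> ball z r)"
    by (intro emeasure_mono) (auto simp: S open_Int)
  moreover have "emeasure lebesgue (ball w e') > 0"
    using e' by (simp add: emeasure_ball)
  ultimately show ?thesis by simp
qed

lemma nn_integral_ball_continuous_pos:
  fixes f :: "'a::euclidean_space \<Rightarrow> real"
  assumes f: "continuous_on (cball x r) f" "\<And>y. y \<in> cball x r \<Longrightarrow> f y > 0" and r: "r > 0"
  shows "0 < (\<integral>\<^sup>+ y. ennreal (f y) * indicator (ball x r) y \<partial>lebesgue)"
    and "(\<integral>\<^sup>+ y. ennreal (f y) * indicator (ball x r) y \<partial>lebesgue) < \<infinity>"
proof -
  have ne: "cball x r \<noteq> {}" using r by auto
  obtain xm where xm: "xm \<in> cball x r" "\<And>y. y \<in> cball x r \<Longrightarrow> f xm \<le> f y"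
    using continuous_attains_inf[OF compact_cball ne f(1)] by blast
  obtain xM where xM: "\<And>y. y \<in> cball x r \<Longrightarrow> f y \<le> f xM"
    using continuous_attains_sup[OF compact_cball ne f(1)] by blast
  have "0 < ennreal (f xm) * emeasure lebesgue (ball x r)"
    using f(2)[OF xm(1)] r by (simp add: emeasure_ball ennreal_mult[symmetric])
  also have "\<dots> = (\<integral>\<^sup>+ y. ennreal (f xm) * indicator (ball x r) y \<partial>lebesgue)"
    by (rule nn_integral_cmult_indicator[symmetric]) simp
  also have "\<dots> \<le> (\<integral>\<^sup>+ y. ennreal (f y) * indicator (ball x r) y \<partial>lebesgue)"
    by (rule nn_integral_mono) (use xm in \<open>auto simp: indicator_def intro!: ennreal_leI\<close>)
  finally show "0 < (\<integral>\<^sup>+ y. ennreal (f y) * indicator (ball x r) y \<partial>lebesgue)" .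
  have "(\<integral>\<^sup>+ y. ennreal (f y) * indicator (ball x r) y \<partial>lebesgue)
      \<le> (\<integral>\<^sup>+ y. ennreal (f xM) * indicator (ball x r) y \<partial>lebesgue)"
    by (rule nn_integral_mono) (use xM in \<open>auto simp: indicator_def intro!: ennreal_leI\<close>)
  also have "\<dots> = ennreal (f xM) * emeasure lebesgue (ball x r)"
    by (rule nn_integral_cmult_indicator) simp
  also have "\<dots> < \<infinity>" using emeasure_lborel_ball_finite[of x r] by (simp add: ennreal_mult_less_top)
  finally show "(\<integral>\<^sup>+ y. ennreal (f y) * indicator (ball x r) y \<partial>lebesgue) < \<infinity>" .
qed

lemma borel_measurable_ennreal_mult_indicator_ball:
  fixes f :: "'a::euclidean_space \<Rightarrow> real"
  assumes "continuous_on (cball x r) f" "r > 0"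
  shows "(\<lambda>y. ennreal (f y) * indicator (ball x r) y) \<in> borel_measurable lebesgue"
proof -
  have "(\<lambda>y. indicator (ball x r) y * f y) \<in> borel_measurable lebesgue"
    using borel_measurable_indicator_mult_continuous[of "ball x r" f] assms by simp
  moreover have "(\<lambda>y. ennreal (f y) * indicator (ball x r) y) = (\<lambda>y. ennreal (indicator (ball x r) y * f y))"
    by (auto simp: indicator_def fun_eq_iff)
  ultimately show ?thesis by simp
qed

lemma nn_integral_divide_ennreal:
  fixes f :: "'a \<Rightarrow> real" and g :: "'a \<Rightarrow> ennreal"
  assumes "c > 0" "(\<lambda>y. ennreal (f y) * g y) \<in> borel_measurable M"
  shows "(\<integral>\<^sup>+ y. ennreal (f y / c) * g y \<partial>M) = ennreal (1 / c) * (\<integral>\<^sup>+ y. ennreal (f y) * g y \<partial>M)"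
proof -
  have "ennreal (f y / c) = ennreal (1 / c) * ennreal (f y)" for y
    using ennreal_mult'[of "1 / c" "f y"] assms(1) by simp
  then show ?thesis using nn_integral_cmult[OF assms(2)] by (simp add: mult.assoc)
qed

lemma ennreal_le_divide_if_mult_le:
  fixes I :: ennreal and c X :: real
  assumes "0 < c" "ennreal c * I \<le> ennreal X"
  shows "I \<le> ennreal (X / c)"
proof -
  have one: "ennreal (1/c) * ennreal c = 1"
    using assms by (simp add: ennreal_mult[symmetric])
  have "I = ennreal (1/c) * (ennreal c * I)" by (simp add: one mult.assoc[symmetric])
  also have "\<dots> \<le> ennreal (1/c) * ennreal X" using assms(2) by (rule mult_left_mono) simp
  also have "\<dots> \<le> ennreal (X / c)"
  proof (cases "X \<ge> 0")
    case True
    then have "ennreal (1/c) * ennreal X = ennreal (1/c * X)"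
      using assms(1) by (intro ennreal_mult[symmetric]) auto
    then show ?thesis by simp
  next
    case False
    then show ?thesis by (simp add: ennreal_neg)
  qed
  finally show ?thesis .
qed

lemma ennreal_le_mult_INF:
  fixes X :: ennreal and c :: real and f :: "nat \<Rightarrow> ennreal"
  assumes "0 < c" "\<And>n. n \<in> S \<Longrightarrow> X \<le> ennreal c * f n"
  shows "X \<le> ennreal c * (INF n\<in>S. f n)"
proof -
  have one: "ennreal (1/c) * ennreal c = 1"
    using assms by (simp add: ennreal_mult[symmetric])
  have "ennreal (1/c) * X \<le> f n" if "n \<in> S" for n
  proof -
    have "ennreal (1/c) * X \<le> ennreal (1/c) * (ennreal c * f n)"
      using assms(2)[OF that] by (rule mult_left_mono) simp
    also have "\<dots> = f n" by (simp add: one mult.assoc[symmetric])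
    finally show ?thesis .
  qed
  then have "ennreal (1/c) * X \<le> (INF n\<in>S. f n)" by (rule INF_greatest)
  then have "ennreal c * (ennreal (1/c) * X) \<le> ennreal c * (INF n\<in>S. f n)"
    by (rule mult_left_mono) simp
  moreover have "ennreal c * (ennreal (1/c) * X) = X"
  proof -
    have "ennreal c * (ennreal (1/c) * X) = (ennreal (1/c) * ennreal c) * X" by (simp only: ac_simps)
    then show ?thesis by (simp add: one)
  qed
  ultimately show ?thesis by simp
qed

locale nonlocal_kernel =
  fixes \<Omega> :: "'a::euclidean_space set"
    and a :: "'a \<Rightarrow> real"
    and K :: "'a \<Rightarrow> 'a \<Rightarrow> real"
    and r0 r1 C0 c0 :: real
  assumes dom: "is_domain \<Omega>"
    and a_cont: "continuous_on (closure \<Omega>) a"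
    and a_bdd: "bounded (a ` \<Omega>)"
    and K_nonneg: "\<And>x y. x \<in> \<Omega> \<Longrightarrow> y \<in> \<Omega> \<Longrightarrow> K x y \<ge> 0"
    and K_meas: "\<And>x. x \<in> \<Omega> \<Longrightarrow> set_borel_measurable lebesgue \<Omega> (K x)"
    and K_ucont: "AE y in lebesgue. y \<in> \<Omega> \<longrightarrow> uniformly_continuous_on \<Omega> (\<lambda>x. K x y)"
    and radii: "r0 \<ge> r1" "r1 > 0"
    and const_bds: "C0 \<ge> c0" "c0 > 0"
    and K_bounds: "\<And>x y. x \<in> \<Omega> \<Longrightarrow> y \<in> \<Omega> \<Longrightarrow>
        C0 * indicator (\<Omega> \<inter> ball x r0) y \<ge> K x y \<and> K x y \<ge> c0 * indicator (\<Omega> \<inter> ball x r1) y"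
begin

lemma Omega_open: "open \<Omega>" and Omega_nonempty: "\<Omega> \<noteq> {}" and Omega_connected: "connected \<Omega>"
  using dom by (auto simp: is_domain_def)

lemma C0_pos: "C0 > 0" using const_bds by linarith

lemma K_le_indicator: "x \<in> \<Omega> \<Longrightarrow> y \<in> \<Omega> \<Longrightarrow> K x y \<le> C0 * indicator (\<Omega> \<inter> ball x r0) y"
  using K_bounds by blast

lemma K_ge_indicator: "x \<in> \<Omega> \<Longrightarrow> y \<in> \<Omega> \<Longrightarrow> c0 * indicator (\<Omega> \<inter> ball x r1) y \<le> K x y"
  using K_bounds by blast

lemma K_le_C0: "x \<in> \<Omega> \<Longrightarrow> y \<in> \<Omega> \<Longrightarrow> K x y \<le> C0"
  using K_le_indicator[of x y] C0_pos by (cases "dist x y < r0") (auto simp: indicator_def)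

lemma K_eq_0_far: "x \<in> \<Omega> \<Longrightarrow> y \<in> \<Omega> \<Longrightarrow> r0 \<le> dist x y \<Longrightarrow> K x y = 0"
  using K_le_indicator[of x y] K_nonneg[of x y] by (auto simp: indicator_def)

lemma K_ge_c0_near: "x \<in> \<Omega> \<Longrightarrow> y \<in> \<Omega> \<Longrightarrow> dist x y < r1 \<Longrightarrow> c0 \<le> K x y"
  using K_ge_indicator[of x y] by (auto simp: indicator_def)

lemma borel_measurable_indicator_mult_K:
  assumes "x \<in> \<Omega>" "D \<subseteq> \<Omega>" "D \<in> sets lebesgue"
  shows "(\<lambda>y. indicator D y * K x y) \<in> borel_measurable lebesgue"
proof -
  have m: "(\<lambda>y. indicator \<Omega> y *\<^sub>R K x y) \<in> borel_measurable lebesgue"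
    using K_meas[OF assms(1)] by (simp add: set_borel_measurable_def)
  have "(\<lambda>y. indicator D y * (indicator \<Omega> y *\<^sub>R K x y)) \<in> borel_measurable lebesgue"
    using m assms(3) by measurable
  moreover have "(\<lambda>y. indicator D y * (indicator \<Omega> y *\<^sub>R K x y)) = (\<lambda>y. indicator D y * K x y)"
    using assms(2) by (auto simp: indicator_def fun_eq_iff)
  ultimately show ?thesis by simp
qed

lemma borel_measurable_nonlocal_integrand:
  assumes x: "x \<in> \<Omega>" and D: "D \<subseteq> \<Omega>" "open D" and f: "continuous_on (closure D) f"
  shows "(\<lambda>y. indicator D y *\<^sub>R (K x y * f y)) \<in> borel_measurable lebesgue"
proof -
  have Dm: "D \<in> sets lebesgue" using D(2) by simp
  have [measurable]: "(\<lambda>y. indicator D y * K x y) \<in> borel_measurable lebesgue"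
    by (rule borel_measurable_indicator_mult_K[OF x D(1) Dm])
  have [measurable]: "(\<lambda>y. indicator D y * f y) \<in> borel_measurable lebesgue"
    by (rule borel_measurable_indicator_mult_continuous[OF D(2) f])
  have "(\<lambda>y. (indicator D y * K x y) * (indicator D y * f y)) \<in> borel_measurable lebesgue"
    by measurable
  moreover have "(\<lambda>y. (indicator D y * K x y) * (indicator D y * f y)) = (\<lambda>y. indicator D y *\<^sub>R (K x y * f y))"
    by (auto simp: fun_eq_iff indicator_def)
  ultimately show ?thesis by simp
qed

lemma integrable_nonlocal_integrand:
  assumes x: "x \<in> \<Omega>" and D: "D \<subseteq> \<Omega>" "open D" and f: "continuous_on (closure D) f"
  shows "integrable lebesgue (\<lambda>y. indicator D y *\<^sub>R (K x y * f y))"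
proof -
  have "compact (closure D \<inter> cball x r0)"
    by (simp add: closed_Int_compact)
  then have "compact (f ` (closure D \<inter> cball x r0))"
    using f by (meson compact_continuous_image continuous_on_subset inf_le1)
  then obtain Mf where Mf: "\<And>y. y \<in> closure D \<inter> cball x r0 \<Longrightarrow> norm (f y) \<le> Mf"
    by (meson bounded_iff compact_imp_bounded imageI)
  define M where "M = max Mf 0"
  have M: "\<And>y. y \<in> closure D \<inter> cball x r0 \<Longrightarrow> \<bar>f y\<bar> \<le> M" "M \<ge> 0"
    using Mf by (auto simp: M_def le_max_iff_disj)
  have int: "integrable lebesgue (\<lambda>y. (C0 * M) * indicator (cball x r0) y)"
    by (intro integrable_mult_right integrable_real_indicator)
       (use emeasure_lborel_cball_finite[of x r0] in auto)
  have meas: "(\<lambda>y. indicator D y *\<^sub>R (K x y * f y)) \<in> borel_measurable lebesgue"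
    by (rule borel_measurable_nonlocal_integrand[OF x D f])
  show ?thesis
  proof (rule Bochner_Integration.integrable_bound[OF int meas], rule AE_I2)
    fix y
    show "norm (indicator D y *\<^sub>R (K x y * f y)) \<le> norm ((C0 * M) * indicator (cball x r0) y)"
    proof (cases "y \<in> D")
      case True
      then have yO: "y \<in> \<Omega>" using D by auto
      show ?thesis
      proof (cases "dist x y < r0")
        case True
        have yc: "y \<in> closure D \<inter> cball x r0" using \<open>y \<in> D\<close> True closure_subset by auto
        have "\<bar>K x y * f y\<bar> = K x y * \<bar>f y\<bar>" using K_nonneg[OF x yO] by (simp add: abs_mult)
        also have "\<dots> \<le> C0 * M"
          using K_le_C0[OF x yO] M(1)[OF yc] K_nonneg[OF x yO] by (intro mult_mono) auto
        finally show ?thesis using \<open>y \<in> D\<close> yc M(2) C0_pos by (simp add: indicator_def)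
      next
        case False
        then show ?thesis using K_eq_0_far[OF x yO] M(2) C0_pos by (simp add: indicator_def)
      qed
    next
      case False
      then show ?thesis by simp
    qed
  qed
qed

lemma nonlocal_op_nonneg:
  assumes x: "x \<in> \<Omega>" and D: "D \<subseteq> \<Omega>" and f: "\<And>y. y \<in> D \<Longrightarrow> f y \<ge> 0"
  shows "nonlocal_op D K f x \<ge> 0"
  unfolding nonlocal_op_def set_lebesgue_integral_def
  by (rule integral_nonneg_AE, rule AE_I2)
     (use D f K_nonneg[OF x] in \<open>auto simp: indicator_def\<close>)

lemma nonlocal_op_eq_nn_integral:
  assumes x: "x \<in> \<Omega>" and D: "D \<subseteq> \<Omega>" "open D" and f: "continuous_on (closure D) f"
    and fpos: "\<And>y. y \<in> D \<Longrightarrow> f y \<ge> 0"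
  shows "ennreal (nonlocal_op D K f x) = (\<integral>\<^sup>+ y. ennreal (indicator D y * K x y * f y) \<partial>lebesgue)"
proof -
  have "(\<integral>\<^sup>+ y. ennreal (indicator D y *\<^sub>R (K x y * f y)) \<partial>lebesgue) =
      ennreal (integral\<^sup>L lebesgue (\<lambda>y. indicator D y *\<^sub>R (K x y * f y)))"
    by (rule nn_integral_eq_integral[OF integrable_nonlocal_integrand[OF x D f]], rule AE_I2)
       (use D fpos K_nonneg[OF x] in \<open>auto simp: indicator_def\<close>)
  then show ?thesis
    by (simp add: nonlocal_op_def set_lebesgue_integral_def mult.assoc)
qed

lemma a_bounded: obtains A where "\<And>x. x \<in> \<Omega> \<Longrightarrow> \<bar>a x\<bar> \<le> A"
  using a_bdd unfolding bounded_iff by auto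

lemma supersolution_imp_le_neg_a:
  assumes D: "D \<subseteq> \<Omega>" and x: "x \<in> D" and \<phi>: "positive_supersolution D K a l \<phi>"
  shows "l \<le> - a x"
proof -
  note \<phi> = positive_supersolutionD[OF \<phi>]
  have px: "\<phi> x > 0" using \<phi>(3)[OF x] .
  have "nonlocal_op D K \<phi> x \<ge> 0"
    using D x \<phi>(3) by (intro nonlocal_op_nonneg) (auto intro: less_imp_le)
  moreover have "nonlocal_op D K \<phi> x + a x * \<phi> x + l * \<phi> x \<le> 0"
    using \<phi>(4)[OF x] .
  ultimately have "(a x + l) * \<phi> x \<le> 0" unfolding distrib_right by linarith
  then show ?thesis using px by (simp add: mult_le_0_iff)
qed

lemma levels_bdd_above:
  assumes "D \<subseteq> \<Omega>" "x \<in> D"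
  shows "bdd_above (supersolution_levels D K a)"
proof (rule bdd_aboveI)
  fix l assume "l \<in> supersolution_levels D K a"
  then obtain \<phi> where "positive_supersolution D K a l \<phi>"
    unfolding supersolution_levels_def by blast
  then show "l \<le> - a x" using assms by (rule supersolution_imp_le_neg_a[rotated 2])
qed

text \<open>The constant function \<open>1\<close> witnesses a finite level because \<open>\<L>\<^sub>D 1 \<le> C\<^sub>0 |B(x,r\<^sub>0)|\<close>.\<close>

lemma levels_nonempty:
  assumes D: "D \<subseteq> \<Omega>" "open D"
  shows "supersolution_levels D K a \<noteq> {}"
proof -
  obtain A where A: "\<And>x. x \<in> \<Omega> \<Longrightarrow> \<bar>a x\<bar> \<le> A" using a_bounded by blast
  define V where "V = measure lebesgue (ball (0::'a) r0)"
  have Lb: "nonlocal_op D K (\<lambda>_. 1) x \<le> C0 * V" if x: "x \<in> D" for x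
  proof -
    have xO: "x \<in> \<Omega>" using x D by auto
    have "nonlocal_op D K (\<lambda>_. 1) x = integral\<^sup>L lebesgue (\<lambda>y. indicator D y *\<^sub>R (K x y * 1))"
      by (simp add: nonlocal_op_def set_lebesgue_integral_def)
    also have "\<dots> \<le> integral\<^sup>L lebesgue (\<lambda>y. C0 * indicator (ball x r0) y)"
    proof (rule integral_mono)
      show "integrable lebesgue (\<lambda>y. indicator D y *\<^sub>R (K x y * 1))"
        by (rule integrable_nonlocal_integrand[OF xO D]) simp
      show "integrable lebesgue (\<lambda>y. C0 * indicator (ball x r0) y)"
        by (intro integrable_mult_right integrable_real_indicator)
           (use emeasure_lborel_ball_finite[of x r0] in auto)
      fix y
      show "indicator D y *\<^sub>R (K x y * 1) \<le> C0 * indicator (ball x r0) y"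
      proof (cases "y \<in> D")
        case True
        then have "y \<in> \<Omega>" using D by auto
        then show ?thesis using K_le_indicator[OF xO \<open>y \<in> \<Omega>\<close>] True by (auto simp: indicator_def)
      qed (use C0_pos in auto)
    qed
    also have "\<dots> = C0 * V" using radii by (simp add: V_def measure_def emeasure_ball)
    finally show ?thesis .
  qed
  have "positive_supersolution D K a (- (C0 * V) - A) (\<lambda>_. 1)"
    unfolding positive_supersolution_def
  proof (intro conjI ballI)
    fix x assume x: "x \<in> D"
    then have "a x \<le> A" using A D abs_le_D1 by blast
    then show "nonlocal_op D K (\<lambda>_. 1) x + a x * 1 + (- (C0 * V) - A) * 1 \<le> 0"
      using Lb[OF x] unfolding mult_1_right by linarith
  qed auto
  then show ?thesis unfolding supersolution_levels_def by blast
qed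

lemma lambda_p_le_neg_a:
  assumes "D \<subseteq> \<Omega>" "open D" "x \<in> D"
  shows "lambda_p D K a \<le> - a x"
proof -
  have bound: "l \<le> - a x" if "l \<in> supersolution_levels D K a" for l
    using that assms(1,3) supersolution_imp_le_neg_a unfolding supersolution_levels_def by blast
  show ?thesis
    unfolding lambda_p_eq_Sup_levels by (rule cSup_least[OF levels_nonempty[OF assms(1,2)] bound])
qed

lemma levels_downward_closed:
  assumes "l \<in> supersolution_levels D K a" "l' \<le> l"
  shows "l' \<in> supersolution_levels D K a"
proof -
  obtain \<phi> where \<phi>: "positive_supersolution D K a l \<phi>"
    using assms(1) unfolding supersolution_levels_def by blast
  note \<phi>' = positive_supersolutionD[OF \<phi>]
  have "positive_supersolution D K a l' \<phi>"
    unfolding positive_supersolution_def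
  proof (intro conjI ballI \<phi>'(1,2))
    fix x assume x: "x \<in> D"
    have "l' * \<phi> x \<le> l * \<phi> x" using \<phi>'(3)[OF x] assms(2) by (intro mult_right_mono) auto
    then show "nonlocal_op D K \<phi> x + a x * \<phi> x + l' * \<phi> x \<le> 0" using \<phi>'(4)[OF x] by linarith
  qed
  then show ?thesis unfolding supersolution_levels_def by blast
qed

lemma less_lambda_p_imp_level:
  assumes "D \<subseteq> \<Omega>" "open D" "x \<in> D" "l < lambda_p D K a"
  shows "l \<in> supersolution_levels D K a"
proof -
  have "l < Sup (supersolution_levels D K a)"
    using assms(4) unfolding lambda_p_eq_Sup_levels .
  then obtain l2 where "l2 \<in> supersolution_levels D K a" "l < l2"
    using less_cSup_iff[OF levels_nonempty[OF assms(1,2)] levels_bdd_above[OF assms(1,3)]] by blast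
  then show ?thesis using levels_downward_closed by (meson less_imp_le)
qed

lemma nonlocal_op_mono_domain:
  assumes D: "D1 \<subseteq> D2" "D2 \<subseteq> \<Omega>" "open D1" "open D2" and x: "x \<in> D1"
    and \<phi>: "continuous_on (closure D2) \<phi>" "\<And>y. y \<in> D2 \<Longrightarrow> \<phi> y \<ge> 0"
  shows "nonlocal_op D1 K \<phi> x \<le> nonlocal_op D2 K \<phi> x"
  unfolding nonlocal_op_def set_lebesgue_integral_def
proof (rule integral_mono)
  have xO: "x \<in> \<Omega>" using x D(1,2) by blast
  have c1: "continuous_on (closure D1) \<phi>" using \<phi>(1) closure_mono[OF D(1)] by (rule continuous_on_subset)
  have "D1 \<subseteq> \<Omega>" using D(1,2) by (rule order_trans)
  then show "integrable lebesgue (\<lambda>y. indicator D1 y *\<^sub>R (K x y * \<phi> y))"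
    using integrable_nonlocal_integrand[OF xO _ D(3) c1] by blast
  show "integrable lebesgue (\<lambda>y. indicator D2 y *\<^sub>R (K x y * \<phi> y))"
    using integrable_nonlocal_integrand[OF xO D(2) D(4) \<phi>(1)] .
  fix y
  show "indicator D1 y *\<^sub>R (K x y * \<phi> y) \<le> indicator D2 y *\<^sub>R (K x y * \<phi> y)"
  proof (cases "y \<in> D2")
    case True
    have "K x y \<ge> 0" using K_nonneg[OF xO] True D(2) by blast
    then have "K x y * \<phi> y \<ge> 0" using \<phi>(2)[OF True] by simp
    then show ?thesis using True by (simp add: indicator_def)
  next
    case False
    then show ?thesis using D(1) by (auto simp: indicator_def)
  qed
qed

lemma levels_antimono:
  assumes D: "D1 \<subseteq> D2" "D2 \<subseteq> \<Omega>" "open D1" "open D2"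
  shows "supersolution_levels D2 K a \<subseteq> supersolution_levels D1 K a"
proof
  fix l assume "l \<in> supersolution_levels D2 K a"
  then obtain \<phi> where \<phi>: "positive_supersolution D2 K a l \<phi>"
    unfolding supersolution_levels_def by blast
  have cl: "closure D1 \<subseteq> closure D2" using D(1) closure_mono by blast
  note \<phi> = positive_supersolutionD[OF \<phi>]
  have "positive_supersolution D1 K a l \<phi>"
    unfolding positive_supersolution_def
  proof (intro conjI ballI)
    show "continuous_on (closure D1) \<phi>" using \<phi>(1) cl by (rule continuous_on_subset)
    show "0 < \<phi> x" if "x \<in> closure D1" for x using \<phi>(2) cl that by blast
    fix x assume x: "x \<in> D1"
    have "nonlocal_op D1 K \<phi> x \<le> nonlocal_op D2 K \<phi> x"
      using \<phi>(1,3) by (intro nonlocal_op_mono_domain[OF D x]) (auto intro: less_imp_le)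
    moreover have "nonlocal_op D2 K \<phi> x + a x * \<phi> x + l * \<phi> x \<le> 0"
      using \<phi>(4) x D(1) by blast
    ultimately show "nonlocal_op D1 K \<phi> x + a x * \<phi> x + l * \<phi> x \<le> 0" by linarith
  qed
  then show "l \<in> supersolution_levels D1 K a" unfolding supersolution_levels_def by blast
qed

lemma lambda_p_antimono:
  assumes "D1 \<subseteq> D2" "D2 \<subseteq> \<Omega>" "open D1" "open D2" "x \<in> D1"
  shows "lambda_p D2 K a \<le> lambda_p D1 K a"
  unfolding lambda_p_eq_Sup_levels
proof (rule cSup_subset_mono)
  show "supersolution_levels D2 K a \<noteq> {}" using assms by (intro levels_nonempty)
  show "bdd_above (supersolution_levels D1 K a)" using assms by (intro levels_bdd_above) auto
  show "supersolution_levels D2 K a \<subseteq> supersolution_levels D1 K a"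
    using assms by (intro levels_antimono) auto
qed

end

locale exhaustion = nonlocal_kernel +
  fixes \<Omega>n :: "nat \<Rightarrow> 'a::euclidean_space set"
  assumes sub_dom: "\<And>n. is_domain (\<Omega>n n) \<and> \<Omega>n n \<subseteq> \<Omega>"
    and incr: "\<And>n. \<Omega>n n \<subseteq> \<Omega>n (Suc n)"
    and exhaust: "(\<Union>n. \<Omega>n n) = \<Omega>"
begin

lemma Omega_n_open: "open (\<Omega>n n)" and Omega_n_subset: "\<Omega>n n \<subseteq> \<Omega>" and Omega_n_nonempty: "\<Omega>n n \<noteq> {}"
  using sub_dom[of n] by (auto simp: is_domain_def)

lemma Omega_n_mono: assumes "m \<le> n" shows "\<Omega>n m \<subseteq> \<Omega>n n"
  using lift_Suc_mono_le[of \<Omega>n, OF incr assms] .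

lemma eventually_compact_subset:
  assumes C: "compact C" "C \<subseteq> \<Omega>"
  shows "\<exists>N. \<forall>n\<ge>N. C \<subseteq> \<Omega>n n"
proof -
  have cover: "C \<subseteq> (\<Union>n\<in>UNIV. \<Omega>n n)" using C exhaust by auto
  obtain J where J0: "J \<subseteq> UNIV" and J: "finite J" "C \<subseteq> (\<Union>n\<in>J. \<Omega>n n)"
    by (rule compactE_image[OF C(1), of UNIV \<Omega>n, OF Omega_n_open cover])
  show ?thesis
  proof (intro exI allI impI)
    fix n assume n: "Max (insert 0 J) \<le> n"
    have "\<Omega>n j \<subseteq> \<Omega>n n" if "j \<in> J" for j
    proof -
      have "j \<le> Max (insert 0 J)" using that J(1) by (intro Max_ge) auto
      then show ?thesis using n by (intro Omega_n_mono) linarith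
    qed
    then show "C \<subseteq> \<Omega>n n" using J(2) by blast
  qed
qed

lemma eventually_mem_Omega_n: "x \<in> \<Omega> \<Longrightarrow> \<exists>N. \<forall>n\<ge>N. x \<in> \<Omega>n n"
  using eventually_compact_subset[of "{x}"] by auto

lemma eventually_cball_subset_near:
  assumes p': "p' \<in> \<Omega>" and d: "dist p p' < r1/2"
  shows "\<exists>s' N'. 0 < s' \<and> s' \<le> r1/2 \<and> s' + dist p p' < r1/2 \<and> (\<forall>n\<ge>N'. cball p' s' \<subseteq> \<Omega>n n)"
proof -
  obtain e where e: "e > 0" "cball p' e \<subseteq> \<Omega>" using Omega_open p' open_contains_cball by blast
  define s' where "s' = min e ((r1/2 - dist p p')/2)"
  have s'_le: "s' \<le> (r1/2 - dist p p')/2" "s' \<le> e" unfolding s'_def by (rule min.cobounded2, rule min.cobounded1)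
  have s'_pos: "0 < s'" using e(1) d by (simp add: s'_def)
  have "2 * s' \<le> 2 * ((r1/2 - dist p p')/2)" using s'_le(1) by (rule mult_left_mono) simp
  then have s'_near: "s' + dist p p' < r1/2" using s'_pos by simp
  have "cball p' s' \<subseteq> \<Omega>" using e(2) subset_cball[OF s'_le(2)] by blast
  then obtain N' where "\<forall>n\<ge>N'. cball p' s' \<subseteq> \<Omega>n n" using eventually_compact_subset[OF compact_cball] by blast
  moreover have "s' \<le> r1/2" using s'_near zero_le_dist[of p p'] by linarith
  ultimately show ?thesis using s'_pos s'_near by blast
qed

end

locale normalized_supersolutions = exhaustion +
  fixes \<phi> :: "nat \<Rightarrow> 'a::euclidean_space \<Rightarrow> real" and \<mu> \<delta> B :: real and x0 :: 'a and s0 :: real and N0 :: nat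
  assumes phi_supersolution: "\<And>n. positive_supersolution (\<Omega>n n) K a \<mu> (\<phi> n)"
    and delta: "\<delta> > 0" "\<And>x. x \<in> \<Omega> \<Longrightarrow> \<delta> \<le> - a x - \<mu>"
    and Bb: "B > 0" "\<And>x. x \<in> \<Omega> \<Longrightarrow> - a x - \<mu> \<le> B"
    and x0: "x0 \<in> \<Omega>" and s0: "0 < s0" "s0 \<le> r1/2"
    and N0: "\<And>n. N0 \<le> n \<Longrightarrow> cball x0 s0 \<subseteq> \<Omega>n n"
    and norm1: "\<And>n. N0 \<le> n \<Longrightarrow>
       (\<integral>\<^sup>+ y. ennreal (indicator (\<Omega>n n) y * \<phi> n y) * indicator (ball x0 s0) y \<partial>lebesgue) = 1"
begin

text \<open>\<open>u n\<close> is \<open>\<phi> n\<close> extended by \<open>0\<close> outside \<open>\<Omega>n n\<close>, in \<open>ennreal\<close> so that Fatou's lemma applies;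
  \<open>\<kappa>\<close> is the constant of the Harnack-type bound \<open>mass_near_le_phi\<close>.\<close>

definition "b x = - a x - \<mu>"
definition "\<kappa> = B / c0"
definition "u n y = ennreal (indicator (\<Omega>n n) y * \<phi> n y)"

lemma Omega_sets[measurable]: "\<Omega> \<in> sets lebesgue" using Omega_open by simp
lemma Omega_n_sets[measurable]: "\<Omega>n n \<in> sets lebesgue" using Omega_n_open by simp
lemma ball_sets[measurable]: "ball (p::'a) r \<in> sets lebesgue" by simp
lemma cball_sets[measurable]: "cball (p::'a) r \<in> sets lebesgue"
  using borel_closed[OF closed_cball] by simp

lemma kappa_pos: "\<kappa> > 0" using Bb const_bds by (simp add: \<kappa>_def)

lemma phi_cont: "continuous_on (closure (\<Omega>n n)) (\<phi> n)"
  and phi_pos_interior: "x \<in> \<Omega>n n \<Longrightarrow> \<phi> n x > 0"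
  and phi_ineq: "x \<in> \<Omega>n n \<Longrightarrow> nonlocal_op (\<Omega>n n) K (\<phi> n) x + a x * \<phi> n x + \<mu> * \<phi> n x \<le> 0"
  using positive_supersolutionD[OF phi_supersolution] by blast+

lemma u_measurable[measurable]: "u n \<in> borel_measurable lebesgue"
proof -
  have [measurable]: "(\<lambda>y. indicator (\<Omega>n n) y * \<phi> n y) \<in> borel_measurable lebesgue"
    by (rule borel_measurable_indicator_mult_continuous[OF Omega_n_open phi_cont])
  have "u n = (\<lambda>y. ennreal (indicator (\<Omega>n n) y * \<phi> n y))" by (simp add: fun_eq_iff u_def)
  then show ?thesis by simp
qed

lemma u_eq: "y \<in> \<Omega>n n \<Longrightarrow> u n y = ennreal (\<phi> n y)"
  by (simp add: u_def)

lemma nn_integral_K_phi_le: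
  assumes x: "x \<in> \<Omega>n n"
  shows "(\<integral>\<^sup>+ y. ennreal (indicator (\<Omega>n n) y * K x y * \<phi> n y) \<partial>lebesgue) \<le> ennreal (b x * \<phi> n x)"
proof -
  have xO: "x \<in> \<Omega>" using x Omega_n_subset by auto
  have "(\<integral>\<^sup>+ y. ennreal (indicator (\<Omega>n n) y * K x y * \<phi> n y) \<partial>lebesgue) = ennreal (nonlocal_op (\<Omega>n n) K (\<phi> n) x)"
    by (rule nonlocal_op_eq_nn_integral[symmetric, OF xO Omega_n_subset Omega_n_open phi_cont]) (use phi_pos_interior in force)
  also have "\<dots> \<le> ennreal (b x * \<phi> n x)"
  proof (rule ennreal_leI)
    have "b x * \<phi> n x = - (a x * \<phi> n x) - \<mu> * \<phi> n x" by (simp add: b_def algebra_simps)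
    then show "nonlocal_op (\<Omega>n n) K (\<phi> n) x \<le> b x * \<phi> n x" using phi_ineq[OF x] by linarith
  qed
  finally show ?thesis .
qed

lemma b_pos: "x \<in> \<Omega> \<Longrightarrow> b x > 0" and b_le: "x \<in> \<Omega> \<Longrightarrow> b x \<le> B"
  using delta Bb by (force simp: b_def)+

lemma mass_near_le_phi:
  assumes x: "x \<in> \<Omega>n n"
  shows "(\<integral>\<^sup>+ y. u n y * indicator (ball x r1) y \<partial>lebesgue) \<le> ennreal (\<kappa> * \<phi> n x)"
proof -
  have xO: "x \<in> \<Omega>" using x Omega_n_subset by auto
  have "ennreal c0 * (\<integral>\<^sup>+ y. u n y * indicator (ball x r1) y \<partial>lebesgue)
      = (\<integral>\<^sup>+ y. ennreal c0 * (u n y * indicator (ball x r1) y) \<partial>lebesgue)"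
    by (rule nn_integral_cmult[symmetric]) measurable
  also have "\<dots> \<le> (\<integral>\<^sup>+ y. ennreal (indicator (\<Omega>n n) y * K x y * \<phi> n y) \<partial>lebesgue)"
  proof (rule nn_integral_mono)
    fix y
    show "ennreal c0 * (u n y * indicator (ball x r1) y) \<le> ennreal (indicator (\<Omega>n n) y * K x y * \<phi> n y)"
    proof (cases "y \<in> \<Omega>n n \<and> y \<in> ball x r1")
      case True
      then have yO: "y \<in> \<Omega>" using Omega_n_subset by auto
      have "c0 * \<phi> n y \<le> K x y * \<phi> n y"
        using K_ge_c0_near[OF xO yO] True phi_pos_interior[of y n] by (intro mult_right_mono) auto
      moreover have "0 \<le> K x y * \<phi> n y"
        using K_nonneg[OF xO yO] phi_pos_interior[of y n] True by simp
      ultimately show ?thesis using True const_bds phi_pos_interior[of y n]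
        by (simp add: u_def ennreal_mult[symmetric])
    next
      case False
      then show ?thesis by (auto simp: u_def)
    qed
  qed
  also have "\<dots> \<le> ennreal (b x * \<phi> n x)" by (rule nn_integral_K_phi_le[OF x])
  also have "\<dots> \<le> ennreal (B * \<phi> n x)"
    using b_le[OF xO] phi_pos_interior[OF x] by (intro ennreal_leI mult_right_mono) auto
  finally have "ennreal c0 * (\<integral>\<^sup>+ y. u n y * indicator (ball x r1) y \<partial>lebesgue) \<le> ennreal (B * \<phi> n x)" .
  from ennreal_le_divide_if_mult_le[OF _ this] const_bds show ?thesis by (simp add: \<kappa>_def)
qed

text \<open>Local bounds that hold uniformly for all large \<open>n\<close>; by \<open>mass_near_le_phi\<close> each of them
  propagates from \<open>p\<close> to every point within distance \<open>r\<^sub>1/2\<close>.\<close>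

definition "bounded_mass_near p \<longleftrightarrow> (\<exists>s M N. 0 < s \<and> s \<le> r1/2 \<and>
   (\<forall>n\<ge>N. cball p s \<subseteq> \<Omega>n n \<and> (\<integral>\<^sup>+ y. u n y * indicator (ball p s) y \<partial>lebesgue) \<le> ennreal M))"

definition "bounded_below_near p \<longleftrightarrow> (\<exists>s c N. 0 < s \<and> s \<le> r1/2 \<and> 0 < c \<and>
   (\<forall>n\<ge>N. cball p s \<subseteq> \<Omega>n n \<and> (\<forall>y\<in>ball p s. c \<le> \<phi> n y)))"

lemma mass_le_phi:
  assumes "y \<in> \<Omega>n n" "A \<subseteq> ball y r1"
  shows "(\<integral>\<^sup>+ w. u n w * indicator A w \<partial>lebesgue) \<le> ennreal (\<kappa> * \<phi> n y)"
  using nn_integral_mult_indicator_mono[OF assms(2)] mass_near_le_phi[OF assms(1)] by (rule order_trans)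

lemma phi_ge_mass:
  assumes "y \<in> \<Omega>n n" "A \<subseteq> ball y r1" "ennreal m \<le> (\<integral>\<^sup>+ w. u n w * indicator A w \<partial>lebesgue)"
  shows "m / \<kappa> \<le> \<phi> n y"
proof -
  have "ennreal m \<le> ennreal (\<kappa> * \<phi> n y)" using assms(3) mass_le_phi[OF assms(1,2)] by (rule order_trans)
  then have "m \<le> \<kappa> * \<phi> n y" using kappa_pos phi_pos_interior[OF assms(1)] by (simp add: ennreal_le_iff)
  then show ?thesis using kappa_pos by (simp add: divide_le_eq mult.commute)
qed

lemma bounded_mass_half_ball:
  assumes "bounded_mass_near p"
  shows "\<exists>M N. \<forall>n\<ge>N. (\<integral>\<^sup>+ y. u n y * indicator (ball p (r1/2)) y \<partial>lebesgue) \<le> ennreal M"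
proof -
  obtain s M N where s: "0 < s" "s \<le> r1/2"
    and MN: "\<And>n. n \<ge> N \<Longrightarrow> cball p s \<subseteq> \<Omega>n n \<and> (\<integral>\<^sup>+ y. u n y * indicator (ball p s) y \<partial>lebesgue) \<le> ennreal M"
    using assms unfolding bounded_mass_near_def by blast
  define m where "m = (\<bar>M\<bar> + 1) / measure lebesgue (ball p s)"
  have "m > 0" using measure_ball_pos[OF s(1)] by (simp add: m_def add_pos_nonneg)
  have "(\<integral>\<^sup>+ y. u n y * indicator (ball p (r1/2)) y \<partial>lebesgue) \<le> ennreal (\<kappa> * m)" if n: "n \<ge> N" for n
  proof -
    obtain q where q: "q \<in> ball p s" "u n q \<le> ennreal m"
      using nn_integral_ball_le_imp_small_value[OF s(1)] MN[OF n] unfolding m_def by blast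
    have qn: "q \<in> \<Omega>n n" using q(1) MN[OF n] by auto
    have "ball p (r1/2) \<subseteq> ball q r1"
      using q(1) s by (intro ball_subset_ball_iff[THEN iffD2] disjI1) (simp add: dist_commute)
    then have "(\<integral>\<^sup>+ y. u n y * indicator (ball p (r1/2)) y \<partial>lebesgue) \<le> ennreal (\<kappa> * \<phi> n q)"
      by (rule mass_le_phi[OF qn])
    also have "\<dots> \<le> ennreal (\<kappa> * m)"
      using q(2) \<open>m > 0\<close> kappa_pos by (intro ennreal_leI mult_left_mono) (auto simp: u_eq[OF qn])
    finally show ?thesis .
  qed
  then show ?thesis by blast
qed

lemma bounded_mass_near_step:
  assumes "bounded_mass_near p" "p' \<in> \<Omega>" "dist p p' < r1/2"
  shows "bounded_mass_near p'"
proof -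
  obtain M N where MN: "\<And>n. n \<ge> N \<Longrightarrow> (\<integral>\<^sup>+ y. u n y * indicator (ball p (r1/2)) y \<partial>lebesgue) \<le> ennreal M"
    using bounded_mass_half_ball[OF assms(1)] by blast
  obtain s' N' where s': "0 < s'" "s' \<le> r1/2" "s' + dist p p' < r1/2" "\<And>n. n \<ge> N' \<Longrightarrow> cball p' s' \<subseteq> \<Omega>n n"
    using eventually_cball_subset_near[OF assms(2,3)] by blast
  have sub: "ball p' s' \<subseteq> ball p (r1/2)"
    using s'(3) by (intro ball_subset_ball_iff[THEN iffD2] disjI1) (simp add: dist_commute)
  have "cball p' s' \<subseteq> \<Omega>n n \<and> (\<integral>\<^sup>+ y. u n y * indicator (ball p' s') y \<partial>lebesgue) \<le> ennreal M"
    if n: "n \<ge> max N N'" for n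
  proof
    show "cball p' s' \<subseteq> \<Omega>n n" using s'(4) n by auto
    show "(\<integral>\<^sup>+ y. u n y * indicator (ball p' s') y \<partial>lebesgue) \<le> ennreal M"
      by (rule order_trans[OF nn_integral_mult_indicator_mono[OF sub] MN]) (use n in simp)
  qed
  then show ?thesis unfolding bounded_mass_near_def using s'(1,2) by blast
qed

lemma bounded_below_near_step:
  assumes "bounded_below_near p" "p' \<in> \<Omega>" "dist p p' < r1/2"
  shows "bounded_below_near p'"
proof -
  obtain s c N where s: "0 < s" "s \<le> r1/2" "0 < c"
    and cN: "\<And>n. n \<ge> N \<Longrightarrow> cball p s \<subseteq> \<Omega>n n \<and> (\<forall>y\<in>ball p s. c \<le> \<phi> n y)"
    using assms(1) unfolding bounded_below_near_def by blast
  obtain s' N' where s': "0 < s'" "s' \<le> r1/2" "s' + dist p p' < r1/2" "\<And>n. n \<ge> N' \<Longrightarrow> cball p' s' \<subseteq> \<Omega>n n"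
    using eventually_cball_subset_near[OF assms(2,3)] by blast
  define V where "V = measure lebesgue (ball p s)"
  have V: "V > 0" "emeasure lebesgue (ball p s) = ennreal V" using measure_ball_pos[OF s(1)] by (auto simp: V_def)
  have "cball p' s' \<subseteq> \<Omega>n n \<and> (\<forall>y\<in>ball p' s'. c * V / \<kappa> \<le> \<phi> n y)"
    if n: "n \<ge> max N N'" for n
  proof (intro conjI ballI)
    show "cball p' s' \<subseteq> \<Omega>n n" using s'(4) n by auto
    fix y assume y: "y \<in> ball p' s'"
    then have yn: "y \<in> \<Omega>n n" using s'(4)[of n] n ball_subset_cball by auto
    have "dist y p \<le> dist y p' + dist p' p" by (rule dist_triangle)
    then have "ball p s \<subseteq> ball y r1"
      using y s s'(3) by (intro ball_subset_ball_iff[THEN iffD2] disjI1) (simp add: dist_commute)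
    moreover have "ennreal (c * V) \<le> (\<integral>\<^sup>+ w. u n w * indicator (ball p s) w \<partial>lebesgue)"
    proof -
      have "ennreal (c * V) = (\<integral>\<^sup>+ w. ennreal c * indicator (ball p s) w \<partial>lebesgue)"
        using V s by (simp add: ennreal_mult nn_integral_cmult_indicator)
      also have "\<dots> \<le> (\<integral>\<^sup>+ w. u n w * indicator (ball p s) w \<partial>lebesgue)"
      proof (rule nn_integral_mono)
        fix w
        have "ennreal c \<le> u n w" if w: "w \<in> ball p s"
        proof -
          have "w \<in> \<Omega>n n" using cN[of n] n w ball_subset_cball by auto
          then show ?thesis using cN[of n] n w by (simp add: u_eq ennreal_leI)
        qed
        then show "ennreal c * indicator (ball p s) w \<le> u n w * indicator (ball p s) w"
          by (simp add: indicator_def)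
      qed
      finally show ?thesis .
    qed
    ultimately show "c * V / \<kappa> \<le> \<phi> n y" by (rule phi_ge_mass[OF yn])
  qed
  moreover have "0 < c * V / \<kappa>" using s V kappa_pos by simp
  ultimately show ?thesis unfolding bounded_below_near_def using s'(1,2) by blast
qed

lemma bounded_near_x0: "bounded_mass_near x0" "bounded_below_near x0"
proof -
  show "bounded_mass_near x0" unfolding bounded_mass_near_def
    using s0 N0 norm1 by (intro exI[of _ s0] exI[of _ 1] exI[of _ N0]) (auto simp: u_def)
  have "cball x0 s0 \<subseteq> \<Omega>n n \<and> (\<forall>y\<in>ball x0 s0. 1/\<kappa> \<le> \<phi> n y)" if n: "n \<ge> N0" for n
  proof (intro conjI ballI)
    show "cball x0 s0 \<subseteq> \<Omega>n n" using N0 n by auto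
    fix y assume y: "y \<in> ball x0 s0"
    then have yn: "y \<in> \<Omega>n n" using N0[OF n] by auto
    have "ball x0 s0 \<subseteq> ball y r1"
      using y s0 by (intro ball_subset_ball_iff[THEN iffD2] disjI1) (simp add: dist_commute)
    moreover have "ennreal 1 \<le> (\<integral>\<^sup>+ w. u n w * indicator (ball x0 s0) w \<partial>lebesgue)"
      using norm1[OF n] by (simp add: u_def)
    ultimately show "1/\<kappa> \<le> \<phi> n y" by (rule phi_ge_mass[OF yn])
  qed
  then show "bounded_below_near x0" unfolding bounded_below_near_def using s0 kappa_pos
    by (intro exI[of _ s0] exI[of _ "1/\<kappa>"] exI[of _ N0]) auto
qed

lemma bounded_near_everywhere:
  assumes "p \<in> \<Omega>"
  shows "bounded_mass_near p \<and> bounded_below_near p"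
proof (rule connected_induction_dist[OF Omega_connected x0 assms])
  show "bounded_mass_near x0 \<and> bounded_below_near x0" using bounded_near_x0 by blast
  show "0 < r1/2" using radii by simp
  fix q q' assume "q' \<in> \<Omega>" "dist q q' < r1/2" "bounded_mass_near q \<and> bounded_below_near q"
  then show "bounded_mass_near q' \<and> bounded_below_near q'"
    using bounded_mass_near_step bounded_below_near_step by blast
qed

text \<open>\<open>\<psi> = liminf u\<^sub>n\<close>, written out so that monotone convergence applies to \<open>\<psi>_inf\<close>.\<close>

definition "\<psi>_inf m y = (INF n\<in>{m..}. u n y)"
definition "\<psi> y = (SUP m. \<psi>_inf m y)"

lemma psi_inf_measurable[measurable]: "\<psi>_inf m \<in> borel_measurable lebesgue"
proof -
  have "\<psi>_inf m = (\<lambda>y. INF n\<in>{m..}. u n y)" by (simp add: fun_eq_iff \<psi>_inf_def)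
  moreover have "(\<lambda>y. INF n\<in>{m..}. u n y) \<in> borel_measurable lebesgue"
    by (rule borel_measurable_INF) auto
  ultimately show ?thesis by simp
qed

lemma psi_measurable[measurable]: "\<psi> \<in> borel_measurable lebesgue"
proof -
  have "\<psi> = (\<lambda>y. SUP m\<in>UNIV. \<psi>_inf m y)" by (simp add: fun_eq_iff \<psi>_def)
  moreover have "(\<lambda>y. SUP m\<in>UNIV. \<psi>_inf m y) \<in> borel_measurable lebesgue"
    by (rule borel_measurable_SUP) auto
  ultimately show ?thesis by simp
qed

lemma psi_inf_mono: "m \<le> m' \<Longrightarrow> \<psi>_inf m y \<le> \<psi>_inf m' y"
  unfolding \<psi>_inf_def by (rule INF_superset_mono) auto

lemma psi_inf_le_u: "m \<le> n \<Longrightarrow> \<psi>_inf m y \<le> u n y"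
  unfolding \<psi>_inf_def by (rule INF_lower) auto

lemma psi_inf_le_psi: "\<psi>_inf m y \<le> \<psi> y"
  unfolding \<psi>_def by (rule SUP_upper) auto

lemma psi_bounded_below: assumes "y \<in> \<Omega>" shows "\<exists>c>0. ennreal c \<le> \<psi> y"
proof -
  obtain s c N where s: "0 < s" "0 < c" and cN: "\<And>n. n \<ge> N \<Longrightarrow> cball y s \<subseteq> \<Omega>n n \<and> (\<forall>w\<in>ball y s. c \<le> \<phi> n w)"
    using bounded_near_everywhere[THEN conjunct2, OF assms] unfolding bounded_below_near_def by blast
  have "ennreal c \<le> \<psi>_inf N y" unfolding \<psi>_inf_def
  proof (rule INF_greatest)
    fix n assume "n \<in> {N..}"
    then have n: "n \<ge> N" by simp
    have "y \<in> \<Omega>n n" "c \<le> \<phi> n y" using cN[OF n] s by auto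
    then show "ennreal c \<le> u n y" by (simp add: u_eq ennreal_leI)
  qed
  then show ?thesis using s psi_inf_le_psi[of N y] order_trans by blast
qed

lemma nn_integral_psi_half_ball_finite: assumes "p \<in> \<Omega>" shows "(\<integral>\<^sup>+ y. \<psi> y * indicator (\<Omega> \<inter> ball p (r1/2)) y \<partial>lebesgue) < \<infinity>"
proof -
  obtain M N where MN: "\<And>n. n \<ge> N \<Longrightarrow> (\<integral>\<^sup>+ y. u n y * indicator (ball p (r1/2)) y \<partial>lebesgue) \<le> ennreal M"
    using bounded_mass_half_ball[OF bounded_near_everywhere[THEN conjunct1, OF assms]] by blast
  have inc: "incseq (\<lambda>m y. \<psi>_inf m y * indicator (\<Omega> \<inter> ball p (r1/2)) y)"
    by (auto simp: incseq_def le_fun_def intro!: mult_right_mono psi_inf_mono)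
  have "(\<integral>\<^sup>+ y. \<psi> y * indicator (\<Omega> \<inter> ball p (r1/2)) y \<partial>lebesgue)
      = (\<integral>\<^sup>+ y. (SUP m. \<psi>_inf m y * indicator (\<Omega> \<inter> ball p (r1/2)) y) \<partial>lebesgue)"
    by (simp add: \<psi>_def SUP_mult_right_ennreal)
  also have "\<dots> = (SUP m. (\<integral>\<^sup>+ y. \<psi>_inf m y * indicator (\<Omega> \<inter> ball p (r1/2)) y \<partial>lebesgue))"
    by (rule nn_integral_monotone_convergence_SUP[OF inc]) measurable
  also have "\<dots> \<le> ennreal M"
  proof (rule SUP_least)
    fix m
    have "(\<integral>\<^sup>+ y. \<psi>_inf m y * indicator (\<Omega> \<inter> ball p (r1/2)) y \<partial>lebesgue)
        \<le> (\<integral>\<^sup>+ y. u (max m N) y * indicator (ball p (r1/2)) y \<partial>lebesgue)"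
      by (rule nn_integral_mono) (auto simp: indicator_def intro: psi_inf_le_u)
    also have "\<dots> \<le> ennreal M" by (rule MN) simp
    finally show "(\<integral>\<^sup>+ y. \<psi>_inf m y * indicator (\<Omega> \<inter> ball p (r1/2)) y \<partial>lebesgue) \<le> ennreal M" .
  qed
  finally have "(\<integral>\<^sup>+ y. \<psi> y * indicator (\<Omega> \<inter> ball p (r1/2)) y \<partial>lebesgue) \<le> ennreal M" .
  then show ?thesis using ennreal_less_top[of M] by (auto intro: le_less_trans)
qed

lemma nn_integral_psi_cball_finite: "(\<integral>\<^sup>+ y. \<psi> y * indicator (\<Omega> \<inter> cball z R) y \<partial>lebesgue) < \<infinity>"
proof -
  have cpt: "compact (closure \<Omega> \<inter> cball z R)" by (simp add: closed_Int_compact)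
  have cov: "closure \<Omega> \<inter> cball z R \<subseteq> (\<Union>p\<in>\<Omega>. ball p (r1/2))"
  proof
    fix w assume "w \<in> closure \<Omega> \<inter> cball z R"
    then have wc: "w \<in> closure \<Omega>" by simp
    have "\<exists>p\<in>\<Omega>. dist p w < r1/2"
      using wc[unfolded closure_approachable, rule_format, of "r1/2"] radii by simp
    then obtain p where "p \<in> \<Omega>" "dist p w < r1/2" by blast
    then show "w \<in> (\<Union>p\<in>\<Omega>. ball p (r1/2))" by auto
  qed
  obtain J where J: "J \<subseteq> \<Omega>" "finite J" "closure \<Omega> \<inter> cball z R \<subseteq> (\<Union>p\<in>J. ball p (r1/2))"
    by (rule compactE_image[OF cpt, of \<Omega> "\<lambda>p. ball p (r1/2)", OF _ cov]) simp
  have "(\<integral>\<^sup>+ y. \<psi> y * indicator (\<Omega> \<inter> cball z R) y \<partial>lebesgue)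
      \<le> (\<integral>\<^sup>+ y. (\<Sum>p\<in>J. \<psi> y * indicator (\<Omega> \<inter> ball p (r1/2)) y) \<partial>lebesgue)"
  proof (rule nn_integral_mono)
    fix y
    show "\<psi> y * indicator (\<Omega> \<inter> cball z R) y \<le> (\<Sum>p\<in>J. \<psi> y * indicator (\<Omega> \<inter> ball p (r1/2)) y)"
    proof (cases "y \<in> \<Omega> \<inter> cball z R")
      case True
      then obtain p where p: "p \<in> J" "y \<in> ball p (r1/2)" using J(3) closure_subset by blast
      have "\<psi> y * indicator (\<Omega> \<inter> cball z R) y = \<psi> y * indicator (\<Omega> \<inter> ball p (r1/2)) y"
        using True p by (simp add: indicator_def)
      also have "\<dots> \<le> (\<Sum>p\<in>J. \<psi> y * indicator (\<Omega> \<inter> ball p (r1/2)) y)"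
        by (rule member_le_sum[OF p(1) _ J(2)]) simp
      finally show ?thesis .
    qed simp
  qed
  also have "\<dots> = (\<Sum>p\<in>J. (\<integral>\<^sup>+ y. \<psi> y * indicator (\<Omega> \<inter> ball p (r1/2)) y \<partial>lebesgue))"
    by (rule nn_integral_sum) measurable
  also have "\<dots> < \<infinity>" using nn_integral_psi_half_ball_finite J(1,2) by (auto simp: subset_eq)
  finally show ?thesis .
qed

lemma nn_integral_K_u_le:
  assumes xn: "x \<in> \<Omega>n n"
  shows "(\<integral>\<^sup>+ y. ennreal (indicator \<Omega> y * K x y) * u n y \<partial>lebesgue) \<le> ennreal (b x) * u n x"
proof -
  have x: "x \<in> \<Omega>" using xn Omega_n_subset by auto
  have "(\<integral>\<^sup>+ y. ennreal (indicator \<Omega> y * K x y) * u n y \<partial>lebesgue)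
      = (\<integral>\<^sup>+ y. ennreal (indicator (\<Omega>n n) y * K x y * \<phi> n y) \<partial>lebesgue)"
  proof (rule nn_integral_cong)
    fix y
    show "ennreal (indicator \<Omega> y * K x y) * u n y = ennreal (indicator (\<Omega>n n) y * K x y * \<phi> n y)"
    proof (cases "y \<in> \<Omega>n n")
      case True
      then have "y \<in> \<Omega>" using Omega_n_subset by auto
      then show ?thesis using True K_nonneg[OF x] less_imp_le[OF phi_pos_interior[OF True]]
        by (simp add: u_eq ennreal_mult)
    qed (simp add: u_def)
  qed
  also have "\<dots> \<le> ennreal (b x * \<phi> n x)" by (rule nn_integral_K_phi_le[OF xn])
  also have "\<dots> = ennreal (b x) * u n x"
    using less_imp_le[OF b_pos[OF x]] less_imp_le[OF phi_pos_interior[OF xn]] xn by (simp add: u_eq ennreal_mult)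
  finally show ?thesis .
qed

text \<open>Fatou's lemma passes the supersolution inequality of the \<open>u n\<close> to their liminf.\<close>

lemma psi_supersolution:
  assumes x: "x \<in> \<Omega>"
  shows "(\<integral>\<^sup>+ y. ennreal (indicator \<Omega> y * K x y) * \<psi> y \<partial>lebesgue) \<le> ennreal (b x) * \<psi> x"
proof -
  have [measurable]: "(\<lambda>y. indicator \<Omega> y * K x y) \<in> borel_measurable lebesgue"
    by (rule borel_measurable_indicator_mult_K[OF x]) (auto simp: Omega_open)
  obtain Nx where Nx: "\<And>n. n \<ge> Nx \<Longrightarrow> x \<in> \<Omega>n n" using eventually_mem_Omega_n[OF x] by blast
  have step: "(\<integral>\<^sup>+ y. ennreal (indicator \<Omega> y * K x y) * \<psi>_inf m y \<partial>lebesgue) \<le> ennreal (b x) * \<psi> x" for m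
  proof -
    define n0 where "n0 = max m Nx"
    have "(\<integral>\<^sup>+ y. ennreal (indicator \<Omega> y * K x y) * \<psi>_inf m y \<partial>lebesgue) \<le> ennreal (b x) * \<psi>_inf n0 x"
      unfolding \<psi>_inf_def[of n0]
    proof (rule ennreal_le_mult_INF[OF b_pos[OF x]])
      fix n assume "n \<in> {n0..}"
      then have n: "n \<ge> m" "n \<ge> Nx" by (auto simp: n0_def)
      have "(\<integral>\<^sup>+ y. ennreal (indicator \<Omega> y * K x y) * \<psi>_inf m y \<partial>lebesgue)
          \<le> (\<integral>\<^sup>+ y. ennreal (indicator \<Omega> y * K x y) * u n y \<partial>lebesgue)"
        by (rule nn_integral_mono) (intro mult_left_mono psi_inf_le_u n, simp)
      also have "\<dots> \<le> ennreal (b x) * u n x" by (rule nn_integral_K_u_le) (use Nx n in auto)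
      finally show "(\<integral>\<^sup>+ y. ennreal (indicator \<Omega> y * K x y) * \<psi>_inf m y \<partial>lebesgue) \<le> ennreal (b x) * u n x" .
    qed
    also have "\<dots> \<le> ennreal (b x) * \<psi> x" by (intro mult_left_mono psi_inf_le_psi) simp
    finally show ?thesis .
  qed
  have inc: "incseq (\<lambda>m y. ennreal (indicator \<Omega> y * K x y) * \<psi>_inf m y)"
    by (auto simp: incseq_def le_fun_def intro!: mult_left_mono psi_inf_mono)
  have "(\<integral>\<^sup>+ y. ennreal (indicator \<Omega> y * K x y) * \<psi> y \<partial>lebesgue)
      = (\<integral>\<^sup>+ y. (SUP m. ennreal (indicator \<Omega> y * K x y) * \<psi>_inf m y) \<partial>lebesgue)"
    by (simp add: \<psi>_def SUP_mult_left_ennreal)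
  also have "\<dots> = (SUP m. (\<integral>\<^sup>+ y. ennreal (indicator \<Omega> y * K x y) * \<psi>_inf m y \<partial>lebesgue))"
    by (rule nn_integral_monotone_convergence_SUP[OF inc]) measurable
  also have "\<dots> \<le> ennreal (b x) * \<psi> x" by (rule SUP_least) (rule step)
  finally show ?thesis .
qed

text \<open>\<open>K_ext z\<close> extends \<open>K(\<cdot>,y)\<close> from \<open>\<Omega>\<close> to \<open>closure \<Omega>\<close> as a limit along a sequence in \<open>\<Omega>\<close> tending to
  \<open>z\<close>; for the a.e. \<open>y\<close> where \<open>K(\<cdot>,y)\<close> is uniformly continuous this is its continuous extension,
  for the remaining null set of \<open>y\<close> the junk value of \<open>lim\<close> is never inspected.\<close>

definition "approx_seq z = (if z \<in> \<Omega> then (\<lambda>k. z) else (SOME s. (\<forall>k. s k \<in> \<Omega>) \<and> s \<longlonglongrightarrow> z))"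
definition "K_ext z y = lim (\<lambda>k. indicator \<Omega> y * K (approx_seq z k) y)"
definition "K_regular y \<longleftrightarrow> (y \<in> \<Omega> \<longrightarrow> uniformly_continuous_on \<Omega> (\<lambda>x. K x y))"

lemma AE_K_regular: "AE y in lebesgue. K_regular y"
  using K_ucont by (simp add: K_regular_def)

lemma approx_seq:
  assumes "z \<in> closure \<Omega>"
  shows "\<And>k. approx_seq z k \<in> \<Omega>" "approx_seq z \<longlonglongrightarrow> z"
proof -
  have "(\<forall>k. approx_seq z k \<in> \<Omega>) \<and> approx_seq z \<longlonglongrightarrow> z"
  proof (cases "z \<in> \<Omega>")
    case False
    have ex: "\<exists>s. (\<forall>k. s k \<in> \<Omega>) \<and> s \<longlonglongrightarrow> z" using assms by (simp add: closure_sequential)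
    show ?thesis using False someI_ex[OF ex] by (simp add: approx_seq_def)
  qed (simp add: approx_seq_def)
  then show "\<And>k. approx_seq z k \<in> \<Omega>" "approx_seq z \<longlonglongrightarrow> z" by auto
qed

lemma K_ext_eq: "z \<in> \<Omega> \<Longrightarrow> K_ext z y = indicator \<Omega> y * K z y"
  by (simp add: K_ext_def approx_seq_def limI[OF tendsto_const])

lemma K_ext_outside: "y \<notin> \<Omega> \<Longrightarrow> K_ext z y = 0"
  by (simp add: K_ext_def limI[OF tendsto_const])

lemma K_ext_continuous:
  assumes y: "y \<in> \<Omega>" "K_regular y"
  shows "\<exists>g. continuous_on (closure \<Omega>) g \<and> (\<forall>z\<in>closure \<Omega>. K_ext z y = g z \<and> (\<lambda>k. K (approx_seq z k) y) \<longlonglongrightarrow> g z)"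
proof -
  have uc: "uniformly_continuous_on \<Omega> (\<lambda>x. K x y)" using y by (simp add: K_regular_def)
  obtain g where g: "uniformly_continuous_on (closure \<Omega>) g" "\<And>x. x \<in> \<Omega> \<Longrightarrow> K x y = g x"
    by (rule uniformly_continuous_on_extension_on_closure[OF uc]) (rule that)
  have gc: "continuous_on (closure \<Omega>) g" using g(1) uniformly_continuous_imp_continuous by blast
  have "K_ext z y = g z \<and> (\<lambda>k. K (approx_seq z k) y) \<longlonglongrightarrow> g z" if z: "z \<in> closure \<Omega>" for z
  proof -
    have "(\<lambda>k. g (approx_seq z k)) \<longlonglongrightarrow> g z"
      by (intro continuous_on_tendsto_compose[OF gc] always_eventually)
         (use approx_seq[OF z] closure_subset z in auto)
    moreover have "(\<lambda>k. K (approx_seq z k) y) = (\<lambda>k. g (approx_seq z k))" using g(2) approx_seq(1)[OF z] by auto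
    ultimately have l: "(\<lambda>k. K (approx_seq z k) y) \<longlonglongrightarrow> g z" by simp
    have "K_ext z y = lim (\<lambda>k. K (approx_seq z k) y)" using y by (simp add: K_ext_def)
    then show ?thesis using limI[OF l] l by simp
  qed
  then show ?thesis using gc by blast
qed

lemma K_ext_tendsto:
  assumes "z \<in> closure \<Omega>" "y \<in> \<Omega>" "K_regular y"
  shows "(\<lambda>k. K (approx_seq z k) y) \<longlonglongrightarrow> K_ext z y"
  using K_ext_continuous[OF assms(2,3)] assms(1) by auto

lemma K_ext_nonneg:
  assumes z: "z \<in> closure \<Omega>" and y: "K_regular y"
  shows "0 \<le> K_ext z y"
proof (cases "y \<in> \<Omega>")
  case True
  have "\<forall>\<^sub>F k in sequentially. 0 \<le> K (approx_seq z k) y"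
    using K_nonneg[OF approx_seq(1)[OF z] True] by simp
  then show ?thesis using tendsto_lowerbound[OF K_ext_tendsto[OF z True y]] by simp
qed (simp add: K_ext_outside)

lemma K_ext_le_indicator:
  assumes z: "z \<in> closure \<Omega>" and y: "K_regular y"
  shows "K_ext z y \<le> C0 * indicator (\<Omega> \<inter> cball z r0) y"
proof (cases "y \<in> \<Omega>")
  case yO: True
  note lim = K_ext_tendsto[OF z yO y]
  show ?thesis
  proof (cases "dist z y \<le> r0")
    case True
    have "\<forall>\<^sub>F k in sequentially. K (approx_seq z k) y \<le> C0"
      using K_le_C0[OF approx_seq(1)[OF z] yO] by simp
    then show ?thesis using tendsto_upperbound[OF lim] True yO by (simp add: indicator_def)
  next
    case False
    have "\<forall>\<^sub>F k in sequentially. r0 < dist (approx_seq z k) y"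
      using order_tendstoD(1)[OF tendsto_dist[OF approx_seq(2)[OF z] tendsto_const]] False by simp
    then have "\<forall>\<^sub>F k in sequentially. K (approx_seq z k) y \<le> 0"
      by eventually_elim (use K_eq_0_far[OF approx_seq(1)[OF z] yO] in simp)
    then show ?thesis using tendsto_upperbound[OF lim] False by (simp add: indicator_def)
  qed
qed (simp add: K_ext_outside)

lemma K_ext_ge_indicator:
  assumes z: "z \<in> closure \<Omega>" and y: "K_regular y"
  shows "c0 * indicator (\<Omega> \<inter> ball z r1) y \<le> K_ext z y"
proof (cases "y \<in> \<Omega> \<and> dist z y < r1")
  case True
  have "\<forall>\<^sub>F k in sequentially. dist (approx_seq z k) y < r1"
    using order_tendstoD(2)[OF tendsto_dist[OF approx_seq(2)[OF z] tendsto_const]] True by simp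
  then have "\<forall>\<^sub>F k in sequentially. c0 \<le> K (approx_seq z k) y"
    by eventually_elim (use K_ge_c0_near[OF approx_seq(1)[OF z]] True in simp)
  then have "c0 \<le> K_ext z y" using tendsto_lowerbound[OF K_ext_tendsto[OF z _ y]] True by simp
  then show ?thesis using True by (simp add: indicator_def)
next
  case False
  then show ?thesis using K_ext_nonneg[OF z y] by (auto simp: indicator_def)
qed

lemmas K_ext_bounds = K_ext_nonneg K_ext_le_indicator K_ext_ge_indicator

lemma K_ext_measurable[measurable]: assumes z: "z \<in> closure \<Omega>" shows "K_ext z \<in> borel_measurable lebesgue"
proof -
  have "\<And>k. (\<lambda>y. indicator \<Omega> y * K (approx_seq z k) y) \<in> borel_measurable lebesgue"
    using approx_seq(1)[OF z] by (intro borel_measurable_indicator_mult_K) (auto simp: Omega_open)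
  then have "(\<lambda>y. lim (\<lambda>k. indicator \<Omega> y * K (approx_seq z k) y)) \<in> borel_measurable lebesgue"
    by (rule borel_measurable_lim_metric)
  then show ?thesis by (simp add: K_ext_def[abs_def])
qed

text \<open>\<open>enn2real\<close> sends \<open>\<infinity>\<close> to \<open>0\<close>; this is harmless because \<open>\<psi>\<close> is locally integrable, hence a.e.\ finite.\<close>

definition "\<psi>_real y = enn2real (\<psi> y)"

lemma psi_real_measurable[measurable]: "\<psi>_real \<in> borel_measurable lebesgue"
proof -
  have "\<psi>_real = (\<lambda>y. enn2real (\<psi> y))" by (simp add: fun_eq_iff \<psi>_real_def)
  then show ?thesis by simp
qed

lemma psi_real_nonneg: "0 \<le> \<psi>_real y" by (simp add: \<psi>_real_def)

lemma psi_real_le: "ennreal (\<psi>_real y) \<le> \<psi> y"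
  by (cases "\<psi> y = \<infinity>") (auto simp: \<psi>_real_def ennreal_enn2real_if)

lemma AE_psi_finite: "AE y in lebesgue. y \<in> \<Omega> \<inter> cball z R \<longrightarrow> \<psi> y \<noteq> \<infinity>"
proof -
  have m: "(\<lambda>y. \<psi> y * indicator (\<Omega> \<inter> cball z R) y) \<in> borel_measurable lebesgue" by measurable
  have "AE y in lebesgue. \<psi> y * indicator (\<Omega> \<inter> cball z R) y \<noteq> \<infinity>"
    by (rule nn_integral_PInf_AE[OF m]) (use nn_integral_psi_cball_finite[of z R] in auto)
  then show ?thesis by eventually_elim (auto simp: indicator_def)
qed

lemma psi_real_eq: "\<psi> y \<noteq> \<infinity> \<Longrightarrow> ennreal (\<psi>_real y) = \<psi> y"
  by (simp add: \<psi>_real_def ennreal_enn2real_if)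

lemma integrable_psi_real_cball: "integrable lebesgue (\<lambda>y. \<psi>_real y * indicator (\<Omega> \<inter> cball z R) y)"
proof (rule integrableI_bounded)
  show "(\<lambda>y. \<psi>_real y * indicator (\<Omega> \<inter> cball z R) y) \<in> borel_measurable lebesgue" by measurable
  have "(\<integral>\<^sup>+ y. ennreal (norm (\<psi>_real y * indicator (\<Omega> \<inter> cball z R) y)) \<partial>lebesgue)
      \<le> (\<integral>\<^sup>+ y. \<psi> y * indicator (\<Omega> \<inter> cball z R) y \<partial>lebesgue)"
    by (rule nn_integral_mono) (auto simp: indicator_def psi_real_nonneg psi_real_le)
  also have "\<dots> < \<infinity>" by (rule nn_integral_psi_cball_finite)
  finally show "(\<integral>\<^sup>+ y. ennreal (norm (\<psi>_real y * indicator (\<Omega> \<inter> cball z R) y)) \<partial>lebesgue) < \<infinity>" .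
qed

definition "F z = integral\<^sup>L lebesgue (\<lambda>y. K_ext z y * \<psi>_real y)"

lemma K_ext_psi_dominated:
  assumes z: "z \<in> closure \<Omega>" and y: "K_regular y" and R: "dist z z' + r0 \<le> R"
  shows "norm (K_ext z y * \<psi>_real y) \<le> C0 * (\<psi>_real y * indicator (\<Omega> \<inter> cball z' R) y)"
proof -
  have "norm (K_ext z y * \<psi>_real y) = K_ext z y * \<psi>_real y"
    using K_ext_bounds(1)[OF z y] psi_real_nonneg by simp
  also have "\<dots> \<le> C0 * indicator (\<Omega> \<inter> cball z r0) y * \<psi>_real y"
    using K_ext_bounds(2)[OF z y] psi_real_nonneg by (rule mult_right_mono)
  also have "\<dots> \<le> C0 * (\<psi>_real y * indicator (\<Omega> \<inter> cball z' R) y)"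
  proof -
    have "y \<in> cball z' R" if "y \<in> cball z r0"
      using dist_triangle[of z' y z] dist_commute[of z' z] R that by (simp add: mem_cball)
    then show ?thesis using C0_pos psi_real_nonneg[of y] by (auto simp: indicator_def)
  qed
  finally show ?thesis .
qed

lemma integrable_K_ext_psi: assumes z: "z \<in> closure \<Omega>" shows "integrable lebesgue (\<lambda>y. K_ext z y * \<psi>_real y)"
proof (rule Bochner_Integration.integrable_bound)
  show "integrable lebesgue (\<lambda>y. C0 * (\<psi>_real y * indicator (\<Omega> \<inter> cball z r0) y))"
    by (intro integrable_mult_right integrable_psi_real_cball)
  show "(\<lambda>y. K_ext z y * \<psi>_real y) \<in> borel_measurable lebesgue"
    using K_ext_measurable[OF z] psi_real_measurable by (rule borel_measurable_times)
  show "AE y in lebesgue. norm (K_ext z y * \<psi>_real y) \<le> norm (C0 * (\<psi>_real y * indicator (\<Omega> \<inter> cball z r0) y))"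
    using AE_K_regular
  proof eventually_elim
    case (elim y)
    have "norm (K_ext z y * \<psi>_real y) \<le> C0 * (\<psi>_real y * indicator (\<Omega> \<inter> cball z r0) y)"
      by (rule K_ext_psi_dominated[OF z elim]) simp
    also have "\<dots> \<le> norm (C0 * (\<psi>_real y * indicator (\<Omega> \<inter> cball z r0) y))" by simp
    finally show ?case .
  qed
qed

lemma F_nonneg: assumes z: "z \<in> closure \<Omega>" shows "0 \<le> F z"
proof -
  have "AE y in lebesgue. 0 \<le> K_ext z y * \<psi>_real y"
    using AE_K_regular by eventually_elim (simp add: K_ext_bounds(1)[OF z] psi_real_nonneg)
  then show ?thesis unfolding F_def by (rule integral_nonneg_AE)
qed

lemma F_cont: "continuous_on (closure \<Omega>) F"
proof (rule continuous_on_sequentiallyI)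
  fix v a0 assume v0: "\<forall>n. v n \<in> closure \<Omega>" and a0: "a0 \<in> closure \<Omega>" and lim: "v \<longlonglongrightarrow> a0"
  have v: "\<And>n. v n \<in> closure \<Omega>" using v0 by blast
  have "Bseq v" using lim by (intro convergent_imp_Bseq) (auto simp: convergent_def)
  then obtain Kb where Kb: "\<And>n. norm (v n) \<le> Kb" by (auto simp: Bseq_def)
  define R where "R = Kb + norm a0 + r0"
  have dR: "dist (v n) a0 + r0 \<le> R" for n
    using Kb[of n] norm_triangle_ineq4[of "v n" a0] by (simp add: R_def dist_norm)
  show "(\<lambda>n. F (v n)) \<longlonglongrightarrow> F a0"
    unfolding F_def
  proof (rule integral_dominated_convergence[where w="\<lambda>y. C0 * (\<psi>_real y * indicator (\<Omega> \<inter> cball a0 R) y)"])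
    show "(\<lambda>y. K_ext a0 y * \<psi>_real y) \<in> borel_measurable lebesgue"
      using K_ext_measurable[OF a0] psi_real_measurable by (rule borel_measurable_times)
    show "(\<lambda>y. K_ext (v n) y * \<psi>_real y) \<in> borel_measurable lebesgue" for n
      using K_ext_measurable[OF v] psi_real_measurable by (rule borel_measurable_times)
    show "integrable lebesgue (\<lambda>y. C0 * (\<psi>_real y * indicator (\<Omega> \<inter> cball a0 R) y))"
      by (intro integrable_mult_right integrable_psi_real_cball)
    show "AE y in lebesgue. (\<lambda>n. K_ext (v n) y * \<psi>_real y) \<longlonglongrightarrow> K_ext a0 y * \<psi>_real y"
      using AE_K_regular
    proof eventually_elim
      case (elim y)
      show ?case
      proof (cases "y \<in> \<Omega>")
        case True
        obtain g where g: "continuous_on (closure \<Omega>) g" "\<forall>z\<in>closure \<Omega>. K_ext z y = g z"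
          using K_ext_continuous[OF True elim] by blast
        have "(\<lambda>n. g (v n)) \<longlonglongrightarrow> g a0"
          by (intro continuous_on_tendsto_compose[OF g(1)] always_eventually) (use v a0 lim in auto)
        then have "(\<lambda>n. K_ext (v n) y) \<longlonglongrightarrow> K_ext a0 y" using g(2) v a0 by simp
        then show ?thesis by (rule tendsto_mult_right)
      qed (simp add: K_ext_outside)
    qed
    show "AE y in lebesgue. norm (K_ext (v n) y * \<psi>_real y) \<le> C0 * (\<psi>_real y * indicator (\<Omega> \<inter> cball a0 R) y)" for n
      using AE_K_regular by eventually_elim (rule K_ext_psi_dominated[OF _ _ dR], use v in auto)
  qed
qed

lemma F_pos: assumes z: "z \<in> closure \<Omega>" shows "F z > 0"
proof (rule ccontr)
  assume "\<not> F z > 0"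
  then have "F z = 0" using F_nonneg[OF z] by simp
  have nnAE: "AE y in lebesgue. 0 \<le> K_ext z y * \<psi>_real y"
    using AE_K_regular by eventually_elim (simp add: K_ext_bounds(1)[OF z] psi_real_nonneg)
  have "AE y in lebesgue. K_ext z y * \<psi>_real y = 0"
    using integral_nonneg_eq_0_iff_AE[OF integrable_K_ext_psi[OF z] nnAE] \<open>F z = 0\<close> by (simp add: F_def)
  then have "AE y in lebesgue. y \<notin> \<Omega> \<inter> ball z r1"
    using AE_K_regular AE_psi_finite[of z r1]
  proof eventually_elim
    case (elim y)
    show ?case
    proof
      assume y: "y \<in> \<Omega> \<inter> ball z r1"
      have "c0 \<le> K_ext z y" using K_ext_bounds(3)[OF z elim(2)] y by simp
      then have k: "K_ext z y > 0" using const_bds by simp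
      obtain c where c: "c > 0" "ennreal c \<le> \<psi> y" using psi_bounded_below y by blast
      have fin: "\<psi> y \<noteq> \<infinity>" using elim(3) y by auto
      have "0 < ennreal c" using c(1) by simp
      then have "0 < \<psi> y" using c(2) by (rule less_le_trans)
      moreover have "\<psi> y < top" using fin by (simp add: less_top)
      ultimately have "\<psi>_real y > 0" unfolding \<psi>_real_def by (simp add: enn2real_positive_iff)
      then show False using k elim(1) by simp
    qed
  qed
  note AEn = this
  have eqN: "{x \<in> space lebesgue. \<not> (x \<notin> \<Omega> \<inter> ball z r1)} = \<Omega> \<inter> ball z r1" by auto
  have sN: "\<Omega> \<inter> ball z r1 \<in> sets lebesgue" by measurable
  have "emeasure lebesgue (\<Omega> \<inter> ball z r1) = 0"
    using AEn AE_iff_measurable[OF sN eqN] by blast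
  moreover have "emeasure lebesgue (\<Omega> \<inter> ball z r1) > 0" by (rule emeasure_open_Int_ball_pos[OF Omega_open z]) (use radii in simp)
  ultimately show False by (metis less_irrefl)
qed

text \<open>The candidate supersolution on \<open>\<Omega>\<close>: one smoothing step \<open>F = \<integral> K(\<cdot>,y) \<psi>(y) dy \<le> b \<psi>\<close>
  turns the merely measurable \<open>\<psi>\<close> into a function continuous up to the boundary.\<close>

definition "\<phi>_lim y = F y / b y"

lemma b_continuous: "continuous_on (closure \<Omega>) b"
  unfolding b_def[abs_def] by (intro continuous_intros a_cont)

lemma b_ge_delta: "z \<in> closure \<Omega> \<Longrightarrow> b z \<ge> \<delta>"
  by (rule continuous_ge_on_closure[OF b_continuous]) (use delta in \<open>auto simp: b_def\<close>)

lemma phi_lim_continuous: "continuous_on (closure \<Omega>) \<phi>_lim"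
  unfolding \<phi>_lim_def[abs_def]
  by (intro continuous_on_divide F_cont b_continuous) (use b_ge_delta delta in force)

lemma phi_lim_pos: assumes "z \<in> closure \<Omega>" shows "\<phi>_lim z > 0"
proof -
  have "b z > 0" using b_ge_delta[OF assms] delta by linarith
  then show ?thesis using F_pos[OF assms] by (simp add: \<phi>_lim_def)
qed

lemma F_eq_nn_integral:
  assumes x: "x \<in> \<Omega>"
  shows "ennreal (F x) = (\<integral>\<^sup>+ y. ennreal (indicator \<Omega> y * K x y) * \<psi> y \<partial>lebesgue)"
proof -
  have xc: "x \<in> closure \<Omega>" using x closure_subset by blast
  have "(\<integral>\<^sup>+ y. ennreal (indicator \<Omega> y * K x y) * \<psi> y \<partial>lebesgue)
      = (\<integral>\<^sup>+ y. ennreal (K_ext x y * \<psi>_real y) \<partial>lebesgue)"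
  proof (rule nn_integral_cong_AE)
    show "AE y in lebesgue. ennreal (indicator \<Omega> y * K x y) * \<psi> y = ennreal (K_ext x y * \<psi>_real y)"
      using AE_psi_finite[of x r0]
    proof eventually_elim
      case (elim y)
      show ?case
      proof (cases "y \<in> \<Omega> \<and> dist x y < r0")
        case True
        then have "\<psi> y \<noteq> \<infinity>" using elim by (auto simp: mem_cball)
        then show ?thesis using True K_nonneg[OF x]
          by (simp add: K_ext_eq[OF x] ennreal_mult psi_real_eq psi_real_nonneg)
      next
        case False
        then have Z: "indicator \<Omega> y * K x y = 0" using K_eq_0_far[OF x] by (auto simp: indicator_def)
        show ?thesis by (simp only: K_ext_eq[OF x] Z) simp
      qed
    qed
  qed
  also have "\<dots> = ennreal (F x)"
    unfolding F_def
    by (rule nn_integral_eq_integral[OF integrable_K_ext_psi[OF xc]])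
       (use AE_K_regular in \<open>eventually_elim, simp add: K_ext_bounds[OF xc] psi_real_nonneg\<close>)
  finally show ?thesis ..
qed

lemma phi_lim_le_psi: assumes y: "y \<in> \<Omega>" shows "ennreal (\<phi>_lim y) \<le> \<psi> y"
proof -
  have yc: "y \<in> closure \<Omega>" using y closure_subset by blast
  have Fle: "ennreal (F y) \<le> ennreal (b y) * \<psi> y"
    unfolding F_eq_nn_integral[OF y] by (rule psi_supersolution[OF y])
  have one: "ennreal (1 / b y) * ennreal (b y) = 1"
    using b_pos[OF y] by (simp add: ennreal_mult[symmetric])
  have "ennreal (\<phi>_lim y) = ennreal (1 / b y) * ennreal (F y)"
    using b_pos[OF y] F_nonneg[OF yc] by (simp add: \<phi>_lim_def ennreal_mult[symmetric])
  also have "\<dots> \<le> ennreal (1 / b y) * (ennreal (b y) * \<psi> y)"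
    by (rule mult_left_mono[OF Fle]) simp
  also have "\<dots> = \<psi> y" by (simp add: one mult.assoc[symmetric])
  finally show ?thesis .
qed

lemma nonlocal_op_phi_lim_le_F: assumes x: "x \<in> \<Omega>" shows "nonlocal_op \<Omega> K \<phi>_lim x \<le> F x"
proof -
  have xc: "x \<in> closure \<Omega>" using x closure_subset by blast
  have "ennreal (nonlocal_op \<Omega> K \<phi>_lim x) = (\<integral>\<^sup>+ y. ennreal (indicator \<Omega> y * K x y * \<phi>_lim y) \<partial>lebesgue)"
    by (rule nonlocal_op_eq_nn_integral[OF x order_refl Omega_open phi_lim_continuous])
       (use phi_lim_pos closure_subset in \<open>force intro: less_imp_le\<close>)
  also have "\<dots> \<le> (\<integral>\<^sup>+ y. ennreal (indicator \<Omega> y * K x y) * \<psi> y \<partial>lebesgue)"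
  proof (rule nn_integral_mono)
    fix y
    show "ennreal (indicator \<Omega> y * K x y * \<phi>_lim y) \<le> ennreal (indicator \<Omega> y * K x y) * \<psi> y"
    proof (cases "y \<in> \<Omega>")
      case True
      have "ennreal (indicator \<Omega> y * K x y * \<phi>_lim y) = ennreal (K x y) * ennreal (\<phi>_lim y)"
        using True K_nonneg[OF x True] by (simp add: ennreal_mult')
      also have "\<dots> \<le> ennreal (K x y) * \<psi> y" by (intro mult_left_mono phi_lim_le_psi True) simp
      finally show ?thesis using True by simp
    qed simp
  qed
  also have "\<dots> = ennreal (F x)" by (rule F_eq_nn_integral[OF x, symmetric])
  finally show ?thesis using F_nonneg[OF xc] by (simp add: ennreal_le_iff)
qed

lemma phi_lim_supersolution: "positive_supersolution \<Omega> K a \<mu> \<phi>_lim"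
  unfolding positive_supersolution_def
proof (intro conjI ballI phi_lim_continuous)
  show "0 < \<phi>_lim x" if "x \<in> closure \<Omega>" for x using phi_lim_pos that by blast
  fix x assume x: "x \<in> \<Omega>"
  have e1: "b x * \<phi>_lim x = F x" using b_pos[OF x] by (simp add: \<phi>_lim_def)
  have e2: "b x * \<phi>_lim x = - (a x * \<phi>_lim x) - \<mu> * \<phi>_lim x" by (simp add: b_def algebra_simps)
  show "nonlocal_op \<Omega> K \<phi>_lim x + a x * \<phi>_lim x + \<mu> * \<phi>_lim x \<le> 0"
    using nonlocal_op_phi_lim_le_F[OF x] e1 e2 by linarith
qed

lemma mu_level: "\<mu> \<in> supersolution_levels \<Omega> K a"
  using phi_lim_supersolution unfolding supersolution_levels_def by blast

end

context exhaustion
begin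

lemma normalized_supersolutions_exist:
  assumes levels: "\<And>n. \<mu> \<in> supersolution_levels (\<Omega>n n) K a"
    and s0: "s0 > 0" and N0: "\<And>n. N0 \<le> n \<Longrightarrow> cball x0 s0 \<subseteq> \<Omega>n n"
  obtains \<phi> where "\<And>n. positive_supersolution (\<Omega>n n) K a \<mu> (\<phi> n)"
    and "\<And>n. N0 \<le> n \<Longrightarrow>
      (\<integral>\<^sup>+ y. ennreal (indicator (\<Omega>n n) y * \<phi> n y) * indicator (ball x0 s0) y \<partial>lebesgue) = 1"
proof -
  have "\<forall>n. \<exists>f. positive_supersolution (\<Omega>n n) K a \<mu> f"
    using levels unfolding supersolution_levels_def by blast
  then obtain f0 where f0: "\<And>n. positive_supersolution (\<Omega>n n) K a \<mu> (f0 n)"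
    by metis
  define I where "I n = (\<integral>\<^sup>+ y. ennreal (f0 n y) * indicator (ball x0 s0) y \<partial>lebesgue)" for n
  have cont: "continuous_on (cball x0 s0) (f0 n)" and pos: "\<And>y. y \<in> cball x0 s0 \<Longrightarrow> f0 n y > 0"
    if n: "N0 \<le> n" for n
  proof -
    have sub: "cball x0 s0 \<subseteq> closure (\<Omega>n n)" using N0[OF n] closure_subset by blast
    note f0n = positive_supersolutionD[OF f0[of n]]
    show "continuous_on (cball x0 s0) (f0 n)" using f0n(1) sub by (rule continuous_on_subset)
    show "\<And>y. y \<in> cball x0 s0 \<Longrightarrow> f0 n y > 0" using f0n(2) sub by blast
  qed
  have I: "0 < I n" "I n < \<infinity>" if n: "N0 \<le> n" for n
    unfolding I_def using nn_integral_ball_continuous_pos[OF cont[OF n] pos[OF n] s0] by blast+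
  \<comment> \<open>the value of \<open>c\<close> below \<open>N0\<close> is irrelevant, it only has to be positive\<close>
  define c where "c n = (if N0 \<le> n then enn2real (I n) else 1)" for n
  have c: "c n > 0" for n
    using I[of n] by (auto simp: c_def enn2real_positive_iff)
  have Ic: "I n = ennreal (c n)" if "N0 \<le> n" for n
    using I[OF that] that by (simp add: c_def ennreal_enn2real_if)
  show ?thesis
  proof (rule that[of "\<lambda>n y. f0 n y / c n"])
    show "positive_supersolution (\<Omega>n n) K a \<mu> (\<lambda>y. f0 n y / c n)" for n
      by (rule positive_supersolution_divide[OF f0 c])
    fix n assume n: "N0 \<le> n"
    have "(\<integral>\<^sup>+ y. ennreal (indicator (\<Omega>n n) y * (f0 n y / c n)) * indicator (ball x0 s0) y \<partial>lebesgue)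
        = (\<integral>\<^sup>+ y. ennreal (f0 n y / c n) * indicator (ball x0 s0) y \<partial>lebesgue)"
    proof (rule nn_integral_cong)
      fix y
      have "y \<in> \<Omega>n n" if "y \<in> ball x0 s0" using N0[OF n] that by (auto simp: subset_iff)
      then show "ennreal (indicator (\<Omega>n n) y * (f0 n y / c n)) * indicator (ball x0 s0) y
          = ennreal (f0 n y / c n) * indicator (ball x0 s0) y"
        by (cases "y \<in> ball x0 s0") auto
    qed
    also have "\<dots> = ennreal (1 / c n) * I n"
      unfolding I_def
      by (rule nn_integral_divide_ennreal[OF c borel_measurable_ennreal_mult_indicator_ball[OF cont[OF n] s0]])
    also have "\<dots> = 1" using c[of n] Ic[OF n] by (simp add: ennreal_mult[symmetric])
    finally show "(\<integral>\<^sup>+ y. ennreal (indicator (\<Omega>n n) y * (f0 n y / c n)) * indicator (ball x0 s0) y \<partial>lebesgue) = 1" .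
  qed
qed

lemma level_below_limit:
  assumes L: "\<And>n. L \<le> lambda_p (\<Omega>n n) K a" and muL: "\<mu> < L"
  shows "\<mu> \<in> supersolution_levels \<Omega> K a"
proof -
  have levels: "\<mu> \<in> supersolution_levels (\<Omega>n n) K a" for n
  proof -
    obtain x where "x \<in> \<Omega>n n" using Omega_n_nonempty by blast
    then show ?thesis using less_lambda_p_imp_level[OF Omega_n_subset Omega_n_open] L[of n] muL by force
  qed
  have delta: "\<And>x. x \<in> \<Omega> \<Longrightarrow> L - \<mu> \<le> - a x - \<mu>"
  proof -
    fix x assume "x \<in> \<Omega>"
    then obtain n where "x \<in> \<Omega>n n" using exhaust by blast
    then show "L - \<mu> \<le> - a x - \<mu>"
      using lambda_p_le_neg_a[OF Omega_n_subset Omega_n_open] L[of n] by fastforce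
  qed
  obtain A where A: "\<And>x. x \<in> \<Omega> \<Longrightarrow> \<bar>a x\<bar> \<le> A" using a_bounded by blast
  obtain x0 where x0: "x0 \<in> \<Omega>" using Omega_nonempty by blast
  have Bb: "A + \<bar>\<mu>\<bar> + 1 > 0" "\<And>x. x \<in> \<Omega> \<Longrightarrow> - a x - \<mu> \<le> A + \<bar>\<mu>\<bar> + 1"
  proof -
    show "A + \<bar>\<mu>\<bar> + 1 > 0" using A[OF x0] by linarith
    fix x assume "x \<in> \<Omega>"
    then show "- a x - \<mu> \<le> A + \<bar>\<mu>\<bar> + 1" using A[of x] by linarith
  qed
  obtain e where e: "e > 0" "cball x0 e \<subseteq> \<Omega>" using Omega_open x0 open_contains_cball by blast
  define s0 where "s0 = min e (r1/2)"
  have s0: "0 < s0" "s0 \<le> r1/2" "cball x0 s0 \<subseteq> \<Omega>"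
    using e radii by (auto simp: s0_def mem_cball)
  obtain N0 where N0: "\<And>n. n \<ge> N0 \<Longrightarrow> cball x0 s0 \<subseteq> \<Omega>n n"
    using eventually_compact_subset[OF compact_cball s0(3)] by blast
  obtain \<phi> where \<phi>: "\<And>n. positive_supersolution (\<Omega>n n) K a \<mu> (\<phi> n)"
    "\<And>n. N0 \<le> n \<Longrightarrow> (\<integral>\<^sup>+ y. ennreal (indicator (\<Omega>n n) y * \<phi> n y) * indicator (ball x0 s0) y \<partial>lebesgue) = 1"
    using normalized_supersolutions_exist[OF levels s0(1) N0] by blast
  interpret normalized_supersolutions \<Omega> a K r0 r1 C0 c0 \<Omega>n \<phi> \<mu> "L - \<mu>" "A + \<bar>\<mu>\<bar> + 1" x0 s0 N0
    by unfold_locales (use \<phi> delta muL Bb x0 s0 N0 in simp_all)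
  show ?thesis by (rule mu_level)
qed

end

theorem lemma2p4:
  fixes \<Omega> :: "'a::euclidean_space set"
    and a :: "'a \<Rightarrow> real"
    and K :: "'a \<Rightarrow> 'a \<Rightarrow> real"
    and \<Omega>n :: "nat \<Rightarrow> 'a set"
    and r0 r1 C0 c0 :: real
  assumes dom: "is_domain \<Omega>"
    and a_cont: "continuous_on (closure \<Omega>) a"
    and a_bdd: "bounded (a ` \<Omega>)"
    and K_nonneg: "\<And>x y. x \<in> \<Omega> \<Longrightarrow> y \<in> \<Omega> \<Longrightarrow> K x y \<ge> 0"
    and K_meas: "\<And>x. x \<in> \<Omega> \<Longrightarrow> set_borel_measurable lebesgue \<Omega> (K x)"
    and K_ucont: "AE y in lebesgue. y \<in> \<Omega> \<longrightarrow> uniformly_continuous_on \<Omega> (\<lambda>x. K x y)"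
    and radii: "r0 \<ge> r1" "r1 > 0"
    and const_bds: "C0 \<ge> c0" "c0 > 0"
    and K_bounds: "\<And>x y. x \<in> \<Omega> \<Longrightarrow> y \<in> \<Omega> \<Longrightarrow>
        C0 * indicator (\<Omega> \<inter> ball x r0) y \<ge> K x y \<and> K x y \<ge> c0 * indicator (\<Omega> \<inter> ball x r1) y"
    and sub_dom: "\<And>n. is_domain (\<Omega>n n) \<and> \<Omega>n n \<subseteq> \<Omega>"
    and incr: "\<And>n. \<Omega>n n \<subseteq> \<Omega>n (Suc n)"
    and exhaust: "(\<Union>n. \<Omega>n n) = \<Omega>"
  shows "(\<lambda>n. lambda_p (\<Omega>n n) K a) \<longlonglongrightarrow> lambda_p \<Omega> K a"
proof -
  interpret exhaustion \<Omega> a K r0 r1 C0 c0 \<Omega>n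
    by unfold_locales (fact dom a_cont a_bdd K_nonneg K_meas K_ucont radii const_bds K_bounds sub_dom incr exhaust)+
  define X where "X n = lambda_p (\<Omega>n n) K a" for n
  have dec: "decseq X"
  proof (rule decseq_SucI)
    fix n obtain x where "x \<in> \<Omega>n n" using Omega_n_nonempty by blast
    then show "X (Suc n) \<le> X n"
      unfolding X_def by (rule lambda_p_antimono[OF incr Omega_n_subset Omega_n_open Omega_n_open])
  qed
  have lb: "\<forall>n. lambda_p \<Omega> K a \<le> X n"
  proof
    fix n obtain x where "x \<in> \<Omega>n n" using Omega_n_nonempty by blast
    then show "lambda_p \<Omega> K a \<le> X n"
      unfolding X_def by (rule lambda_p_antimono[OF Omega_n_subset order_refl Omega_n_open Omega_open])
  qed
  obtain L where L: "X \<longlonglongrightarrow> L" "\<forall>n. L \<le> X n" using decseq_convergent[OF dec lb] by blast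
  have "lambda_p \<Omega> K a \<le> L" using lb by (intro LIMSEQ_le_const[OF L(1)]) auto
  moreover have "L \<le> lambda_p \<Omega> K a"
  proof (rule dense_le)
    fix \<mu> assume "\<mu> < L"
    then have "\<mu> \<in> supersolution_levels \<Omega> K a" using level_below_limit L(2) by (auto simp: X_def)
    moreover obtain x where "x \<in> \<Omega>" using Omega_nonempty by blast
    ultimately show "\<mu> \<le> lambda_p \<Omega> K a"
      unfolding lambda_p_eq_Sup_levels using levels_bdd_above[OF order_refl] by (meson cSup_upper)
  qed
  ultimately show ?thesis using L(1) by (simp add: X_def[abs_def])
qed

end
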